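(* For positive integers $n$ and $r$, let $s=(2r,3r,\ldots,nr)$ and $\mu=(r,2r,\ldots,nr)$. Then \[ d_{n-1}^s(z)+d_n^\mu(z)=\sum_{\sigma\in\mathbb{Z}_r\wr\mathfrak{S}_n:\ S_\sigma=\emptyset}z^{\mathrm{des}(\sigma)}. \]
   Context: For a sequence $t=(t_1,\ldots,t_m)$ of positive integers, $P_m^t=\{x\in\mathbb{R}^m:0\le x_1/t_1\le\cdots\le x_m/t_m\le1\}$ and $d_m^t(z)=\ell^\ast(P_m^t;z)$, where for a lattice $d$-simplex $\Delta=\mathrm{conv}(v^{(0)},\ldots,v^{(d)})\subset\mathbb{R}^m$, $\ell^\ast(\Delta;z)=\sum_{x\in\Pi^\circ_\Delta\cap\mathbb{Z}^{m+1}}z^{x_{m+1}}$, $\Pi^\circ_\Delta=\{\sum_i\lambda_i(v^{(i)},1):0<\lambda_i<1\}$. $\mathbb{Z}_r\wr\mathfrak{S}_n$ is the set of $r$-colored permutations $\sigma=\pi_1^{c_1}\cdots\pi_n^{c_n}$ ($\pi\in\mathfrak{S}_n$, $c_i\in\{0,\ldots,r-1\}$). With $\pi_{n+1}=n+1$, $c_{n+1}=0$, $i\in[n]$ is a descent if $c_i>c_{i+1}$, or $c_i=c_{i+1}$ and $\pi_i>\pi_{i+1}$; $\mathrm{des}(\sigma)$ counts descents. With conventions $\pi_0=0$, $c_0=0$, a number $i\in[n]$ is bad for $\sigma$ if, for $j$ with $\pi_j=i$: (1) $\pi_j<\pi_k$ for all $k>j$; (2) $\pi_{j-1}<\pi_k$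 for all $k>j-1$; (3) $c_j=c_{j-1}$. $S_\sigma$ is the set of bad numbers of $\sigma$. *)

theory Defs
  imports Complex_Main "HOL-Combinatorics.Permutations"
begin

text \<open>Points of R^m are modelled as functions nat => real, with coordinates
  indexed by 1..m and all other coordinates equal to 0.\<close>

definition Pset :: "nat \<Rightarrow> (nat \<Rightarrow> nat) \<Rightarrow> (nat \<Rightarrow> real) set" where
  "Pset m t = {x. (\<forall>j. j \<notin> {1..m} \<longrightarrow> x j = 0) \<and>
     (let y = (\<lambda>j. if j = 0 then 0 else if j = m + 1 then 1 else x j / real (t j))
      in \<forall>j\<le>m. y j \<le> y (Suc j))}"

definition vertices :: "(nat \<Rightarrow> real) set \<Rightarrow> (nat \<Rightarrow> real) set" where
  "vertices P = {v. v \<in> P \<and> \<not> (\<exists>a\<in>P. \<exists>b\<in>P. a \<noteq> b \<and>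
       (\<exists>u::real. 0 < u \<and> u < 1 \<and> v = (\<lambda>i. u * a i + (1 - u) * b i)))}"

text \<open>Lattice points of the open fundamental parallelepiped of a simplex with vertex
  set V: pairs (x, k) standing for the point (x_1,...,x_m, k) of Z^(m+1).\<close>
definition par_open_lattice :: "(nat \<Rightarrow> real) set \<Rightarrow> ((nat \<Rightarrow> int) \<times> nat) set" where
  "par_open_lattice V = {(x, k). \<exists>lam::(nat \<Rightarrow> real) \<Rightarrow> real.
       (\<forall>v\<in>V. 0 < lam v \<and> lam v < 1) \<and>
       (\<forall>j. real_of_int (x j) = (\<Sum>v\<in>V. lam v * v j)) \<and>
       real k = (\<Sum>v\<in>V. lam v)}"

definition lstar :: "(nat \<Rightarrow> real) set \<Rightarrow> real \<Rightarrow> real" where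
  "lstar V z = (\<Sum>p\<in>par_open_lattice V. z ^ snd p)"

definition d_poly :: "nat \<Rightarrow> (nat \<Rightarrow> nat) \<Rightarrow> real \<Rightarrow> real" where
  "d_poly m t z = lstar (vertices (Pset m t)) z"

text \<open>r-colored permutations of [n]: (pi, c) with pi in one-line notation
  pi_i = pi i and colours c_i = c i; conventions pi 0 = 0, pi (n+1) = n+1 come from
  permutes, and colours vanish outside 1..n.\<close>
definition colored_perms :: "nat \<Rightarrow> nat \<Rightarrow> ((nat \<Rightarrow> nat) \<times> (nat \<Rightarrow> nat)) set" where
  "colored_perms r n = {(\<pi>, c). \<pi> permutes {1..n} \<and> (\<forall>i\<in>{1..n}. c i < r) \<and>
       (\<forall>i. i \<notin> {1..n} \<longrightarrow> c i = 0)}"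

definition cdes :: "nat \<Rightarrow> (nat \<Rightarrow> nat) \<times> (nat \<Rightarrow> nat) \<Rightarrow> nat" where
  "cdes n \<sigma> = (case \<sigma> of (\<pi>, c) \<Rightarrow>
     card {i\<in>{1..n}. c i > c (Suc i) \<or> (c i = c (Suc i) \<and> \<pi> i > \<pi> (Suc i))})"

definition bad_set :: "nat \<Rightarrow> (nat \<Rightarrow> nat) \<times> (nat \<Rightarrow> nat) \<Rightarrow> nat set" where
  "bad_set n \<sigma> = (case \<sigma> of (\<pi>, c) \<Rightarrow>
     {i\<in>{1..n}. \<exists>j\<in>{1..n}. \<pi> j = i \<and>
        (\<forall>k\<in>{j<..n}. \<pi> j < \<pi> k) \<and>
        (\<forall>k\<in>{j..n}. \<pi> (j - 1) < \<pi> k) \<and>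
        c j = c (j - 1)})"

end

theory Submission
  imports Defs
begin

(* Both sides satisfy transfer recursions over a code E < n r, and the two recursions are exchanged by
   the reflection E |-> n r - E of the nonzero codes.

   Right-hand side: an r-colored permutation of [m + 1] is a first letter, coded as
   E = c_1 (m + 1) + (pi_1 - 1), followed by a colored permutation of [m] whose first letter has code E'.
   Comparing E m with E' (m + 1) decides whether position 1 is a descent and whether position 2 becomes
   bad; bad positions further right are those of the tail, and position 1 is bad exactly when E = 0.

   Left-hand side: the vertices of P_m^t are the 0/t_j chain vertices, so the lattice points of the open
   parallelepiped are the integer vectors whose scaled coordinates a_j / t_j increase by less than 1 at
   each step, up to the height. For mu and for the shifted s these become one family of integer chains,
   split by whether a_1 = 0. Sorting the chains by the residue of their last coordinate modulo n r, the
   last coordinate of a longer chain is determined by its residue when it exists, which gives the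
   lattice recursion with the comparison reversed. *)

lemma sum_greaterThanLessThan_0:
  fixes N :: nat
  shows "(\<Sum>E\<in>{0<..<N}. f E) = (\<Sum>E<N. if E = 0 then 0 else f E)"
proof -
  have "(\<Sum>E<N. if E = 0 then 0 else f E) = (\<Sum>E<N. if E \<noteq> 0 then f E else 0)"
    by (intro sum.cong) auto
  also have "\<dots> = (\<Sum>E\<in>{E\<in>{..<N}. E \<noteq> 0}. f E)" by (rule sum.inter_filter[symmetric]) simp
  also have "{E\<in>{..<N}. E \<noteq> 0} = {0<..<N}" by auto
  finally show ?thesis ..
qed

section \<open>Two transfer recursions\<close>

text \<open>\<open>lattice_transfer r z n E\<close> and \<open>perm_transfer r z n E\<close> are the recursions satisfied by the class
  sums \<open>lattice_class_sum r z (n + 1) E\<close> and \<open>perm_class_sum r z (n + 1) E\<close> below.\<close>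

definition transfer_weight :: "real \<Rightarrow> nat \<Rightarrow> nat \<Rightarrow> real" where
  "transfer_weight z a b = (if a = b then 0 else if a < b then z else 1)"

primrec lattice_transfer :: "nat \<Rightarrow> real \<Rightarrow> nat \<Rightarrow> nat \<Rightarrow> real" where
  "lattice_transfer r z 0 E = (if E < r then 1 else 0)"
| "lattice_transfer r z (Suc n) E = (\<Sum>E'<Suc n * r.
     transfer_weight z (E * Suc n) (E' * Suc (Suc n)) * lattice_transfer r z n E')"

primrec perm_transfer :: "nat \<Rightarrow> real \<Rightarrow> nat \<Rightarrow> nat \<Rightarrow> real" where
  "perm_transfer r z 0 E = (if E < r then (if E = 0 then 1 else z) else 0)"
| "perm_transfer r z (Suc n) E = (\<Sum>E'<Suc n * r.
     transfer_weight z (E' * Suc (Suc n)) (E * Suc n) * perm_transfer r z n E')"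

definition reflect :: "nat \<Rightarrow> nat \<Rightarrow> nat" where
  "reflect N E = (if E = 0 then 0 else N - E)"

lemma bij_betw_reflect: "bij_betw (reflect N) {..<N} {..<N}"
  by (rule bij_betwI[where g="reflect N"]) (auto simp: reflect_def)

lemma bij_betw_reflect_nonzero: "bij_betw (reflect N) {0<..<N} {0<..<N}"
  by (rule bij_betwI[where g="reflect N"]) (auto simp: reflect_def)

lemma transfer_weight_reflect:
  assumes "A * p = B * q" "E < A" "E' < B" "0 < p" "0 < q"
  shows "transfer_weight z (reflect B E' * q) (reflect A E * p) * (if E' = 0 then 1 else z)
       = (if E = 0 then 1 else z) * transfer_weight z (E * p) (E' * q)"
proof (cases "E = 0 \<or> E' = 0")
  case True
  then show ?thesis
    using assms by (auto simp: transfer_weight_def reflect_def)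
next
  case False
  have "int (reflect A E * p) = int (A * p) - int (E * p)"
    using False assms(2) by (simp add: reflect_def diff_mult_distrib)
  moreover have "int (reflect B E' * q) = int (A * p) - int (E' * q)"
    using False assms(1,3) by (simp add: reflect_def diff_mult_distrib)
  ultimately have "reflect B E' * q = reflect A E * p \<longleftrightarrow> E * p = E' * q"
    and "reflect B E' * q < reflect A E * p \<longleftrightarrow> E * p < E' * q"
    by linarith+
  then show ?thesis
    using False by (simp add: transfer_weight_def)
qed

lemma perm_transfer_reflect:
  "E < Suc n * r \<Longrightarrow>
   perm_transfer r z n (reflect (Suc n * r) E) = (if E = 0 then 1 else z) * lattice_transfer r z n E"
proof (induction n arbitrary: E)
  case 0
  then show ?case by (auto simp: reflect_def)
next
  case (Suc n)
  have "perm_transfer r z (Suc n) (reflect (Suc (Suc n) * r) E)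
      = (\<Sum>E'<Suc n * r. transfer_weight z (reflect (Suc n * r) E' * Suc (Suc n))
          (reflect (Suc (Suc n) * r) E * Suc n) * perm_transfer r z n (reflect (Suc n * r) E'))"
    unfolding perm_transfer.simps by (rule sum.reindex_bij_betw[OF bij_betw_reflect, symmetric])
  also have "\<dots> = (\<Sum>E'<Suc n * r. (if E = 0 then 1 else z) *
      (transfer_weight z (E * Suc n) (E' * Suc (Suc n)) * lattice_transfer r z n E'))"
  proof (rule sum.cong[OF refl])
    fix E' assume "E' \<in> {..<Suc n * r}"
    then show "transfer_weight z (reflect (Suc n * r) E' * Suc (Suc n))
          (reflect (Suc (Suc n) * r) E * Suc n) * perm_transfer r z n (reflect (Suc n * r) E')
        = (if E = 0 then 1 else z) * (transfer_weight z (E * Suc n) (E' * Suc (Suc n)) * lattice_transfer r z n E')"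
      using Suc transfer_weight_reflect[of "Suc (Suc n) * r" "Suc n" "Suc n * r" "Suc (Suc n)" E E' z]
      by (simp add: algebra_simps)
  qed
  also have "\<dots> = (if E = 0 then 1 else z) * lattice_transfer r z (Suc n) E"
    by (simp add: sum_distrib_left)
  finally show ?case .
qed

section \<open>Prepending a letter to a colored permutation\<close>

definition shift_above :: "nat \<Rightarrow> nat \<Rightarrow> nat" where
  "shift_above v y = (if v \<le> y then Suc y else y)"

definition unshift_above :: "nat \<Rightarrow> nat \<Rightarrow> nat" where
  "unshift_above v y = (if v < y then y - 1 else y)"

lemma shift_above_less_iff [simp]: "shift_above v a < shift_above v b \<longleftrightarrow> a < b"
  by (auto simp: shift_above_def)

lemma shift_above_eq_iff [simp]: "shift_above v a = shift_above v b \<longleftrightarrow> a = b"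
  by (auto simp: shift_above_def)

lemma shift_above_less_self_iff [simp]: "shift_above v a < v \<longleftrightarrow> a < v"
  by (auto simp: shift_above_def)

lemma shift_above_neq [simp]: "shift_above v a \<noteq> v" "v \<noteq> shift_above v a"
  by (auto simp: shift_above_def)

definition cons_perm :: "nat \<Rightarrow> nat \<Rightarrow> (nat \<Rightarrow> nat) \<Rightarrow> nat \<Rightarrow> nat" where
  "cons_perm m v p =
     (\<lambda>i. if i = 1 then v else if i \<in> {2..Suc m} then shift_above v (p (i - 1)) else i)"

definition cons_colour :: "nat \<Rightarrow> nat \<Rightarrow> (nat \<Rightarrow> nat) \<Rightarrow> nat \<Rightarrow> nat" where
  "cons_colour m col c = (\<lambda>i. if i = 1 then col else if i \<in> {2..Suc m} then c (i - 1) else 0)"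

definition tail_perm :: "nat \<Rightarrow> (nat \<Rightarrow> nat) \<Rightarrow> nat \<Rightarrow> nat" where
  "tail_perm m p = (\<lambda>i. if i \<in> {1..m} then unshift_above (p 1) (p (Suc i)) else i)"

definition tail_colour :: "nat \<Rightarrow> (nat \<Rightarrow> nat) \<Rightarrow> nat \<Rightarrow> nat" where
  "tail_colour m c = (\<lambda>i. if i \<in> {1..m} then c (Suc i) else 0)"

lemma cons_perm_simps:
  "cons_perm m v p 1 = v" "k \<in> {1..m} \<Longrightarrow> cons_perm m v p (Suc k) = shift_above v (p k)"
  "cons_colour m col c 1 = col" "k \<in> {1..m} \<Longrightarrow> cons_colour m col c (Suc k) = c k"
  by (auto simp: cons_perm_def cons_colour_def)

lemma cons_in_colored_perms:
  assumes "(p, c) \<in> colored_perms r m" "v \<in> {1..Suc m}" "col < r"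
  shows "(cons_perm m v p, cons_colour m col c) \<in> colored_perms r (Suc m)"
proof -
  have p: "p permutes {1..m}" using assms(1) by (simp add: colored_perms_def)
  have "cons_perm m v p permutes {1..Suc m}"
  proof (rule inj_imp_permutes)
    show "inj_on (cons_perm m v p) {1..Suc m}"
    proof (rule inj_onI)
      fix x y assume "x \<in> {1..Suc m}" "y \<in> {1..Suc m}" "cons_perm m v p x = cons_perm m v p y"
      then show "x = y"
        using inj_eq[OF permutes_inj[OF p], of "x - 1" "y - 1"]
        by (cases "x = 1"; cases "y = 1") (auto simp: cons_perm_def)
    qed
    show "cons_perm m v p x \<in> {1..Suc m}" if "x \<in> {1..Suc m}" for x
      using that assms(2) permutes_in_image[OF p, of "x - 1"]
      by (auto simp: cons_perm_def shift_above_def)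
  qed (auto simp: cons_perm_def)
  then show ?thesis using assms by (auto simp: colored_perms_def cons_colour_def)
qed

lemma tail_in_colored_perms:
  assumes "(p, c) \<in> colored_perms r (Suc m)"
  shows "(tail_perm m p, tail_colour m c) \<in> colored_perms r m"
proof -
  have p: "p permutes {1..Suc m}" using assms by (simp add: colored_perms_def)
  have p_eq: "p i = p j \<longleftrightarrow> i = j" for i j
    using inj_eq[OF permutes_inj[OF p]] .
  have "tail_perm m p permutes {1..m}"
  proof (rule inj_imp_permutes)
    show "inj_on (tail_perm m p) {1..m}"
    proof (rule inj_onI)
      fix x y assume "x \<in> {1..m}" "y \<in> {1..m}" "tail_perm m p x = tail_perm m p y"
      then have "p (Suc x) = p (Suc y)"
        using p_eq[of "Suc x" 1] p_eq[of "Suc y" 1]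
        by (auto simp: tail_perm_def unshift_above_def split: if_splits)
      then show "x = y" using p_eq by simp
    qed
    show "tail_perm m p x \<in> {1..m}" if "x \<in> {1..m}" for x
      using that permutes_in_image[OF p, of "Suc x"] permutes_in_image[OF p, of 1] p_eq[of "Suc x" 1]
      by (auto simp: tail_perm_def unshift_above_def)
  qed (auto simp: tail_perm_def)
  then show ?thesis using assms by (auto simp: colored_perms_def tail_colour_def)
qed

lemma tail_cons:
  assumes "(p, c) \<in> colored_perms r m"
  shows "tail_perm m (cons_perm m v p) = p" "tail_colour m (cons_colour m col c) = c"
  using assms permutes_not_in[of p "{1..m}"]
  by (auto simp: colored_perms_def tail_perm_def cons_perm_def unshift_above_def shift_above_def
      tail_colour_def cons_colour_def fun_eq_iff)

lemma cons_tail: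
  assumes "(p, c) \<in> colored_perms r (Suc m)"
  shows "cons_perm m (p 1) (tail_perm m p) = p" "cons_colour m (c 1) (tail_colour m c) = c"
proof -
  have p: "p permutes {1..Suc m}" using assms by (simp add: colored_perms_def)
  show "cons_perm m (p 1) (tail_perm m p) = p"
  proof
    fix i
    show "cons_perm m (p 1) (tail_perm m p) i = p i"
      using inj_eq[OF permutes_inj[OF p], of i 1] permutes_not_in[OF p, of i]
      by (cases "i \<in> {2..Suc m}") (auto simp: tail_perm_def cons_perm_def unshift_above_def shift_above_def)
  qed
  show "cons_colour m (c 1) (tail_colour m c) = c"
    using assms by (auto simp: colored_perms_def tail_colour_def cons_colour_def fun_eq_iff)
qed

lemma inj_on_cons:
  "inj_on (\<lambda>\<sigma>. (cons_perm m v (fst \<sigma>), cons_colour m col (snd \<sigma>))) (colored_perms r m)"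
proof (rule inj_onI)
  fix \<sigma> \<tau>
  assume "\<sigma> \<in> colored_perms r m" "\<tau> \<in> colored_perms r m"
    and eq: "(cons_perm m v (fst \<sigma>), cons_colour m col (snd \<sigma>)) = (cons_perm m v (fst \<tau>), cons_colour m col (snd \<tau>))"
  then have "(fst \<sigma>, snd \<sigma>) \<in> colored_perms r m" "(fst \<tau>, snd \<tau>) \<in> colored_perms r m" by simp_all
  moreover have "cons_perm m v (fst \<sigma>) = cons_perm m v (fst \<tau>)"
    and "cons_colour m col (snd \<sigma>) = cons_colour m col (snd \<tau>)"
    using eq by simp_all
  ultimately show "\<sigma> = \<tau>" by (metis tail_cons prod.collapse)
qed

lemma permutes_first_min_iff:
  fixes p :: "nat \<Rightarrow> nat"
  assumes p: "p permutes {1..n}" and n: "1 \<le> n"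
  shows "(\<forall>k\<in>{1<..n}. p 1 < p k) \<longleftrightarrow> p 1 = 1"
proof
  assume min: "\<forall>k\<in>{1<..n}. p 1 < p k"
  have "1 \<in> p ` {1..n}" unfolding permutes_image[OF p] using n by simp
  then obtain k where k: "k \<in> {1..n}" "p k = 1" by (metis imageE)
  show "p 1 = 1"
  proof (cases "k = 1")
    case False
    then have "k \<in> {1<..n}" using k by auto
    then have "p 1 < 1" using min k by fastforce
    moreover have "p 1 \<in> {1..n}" using permutes_in_image[OF p, of 1] n by simp
    ultimately show ?thesis by simp
  qed (use k in simp)
next
  assume p1: "p 1 = 1"
  show "\<forall>k\<in>{1<..n}. p 1 < p k"
  proof
    fix k assume "k \<in> {1<..n}"
    then have "p k \<in> {1..n}" "p k \<noteq> p 1"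
      using permutes_in_image[OF p, of k] inj_eq[OF permutes_inj[OF p], of k 1] by auto
    then show "p 1 < p k" using p1 by auto
  qed
qed

lemma finite_colored_perms: "finite (colored_perms r n)"
proof (rule finite_subset)
  show "colored_perms r n \<subseteq> {p. p permutes {1..n}} \<times>
     {c. \<forall>x. (x \<in> {1..n} \<longrightarrow> c x \<in> {..<r}) \<and> (x \<notin> {1..n} \<longrightarrow> c x = 0)}"
    by (auto simp: colored_perms_def)
  show "finite ({p. p permutes {1..n}} \<times>
     {c. \<forall>x. (x \<in> {1..n} \<longrightarrow> c x \<in> {..<r}) \<and> (x \<notin> {1..n} \<longrightarrow> c x = (0::nat))})"
    by (intro finite_cartesian_product finite_permutations finite_set_of_finite_funs) auto
qed

definition is_descent :: "(nat \<Rightarrow> nat) \<Rightarrow> (nat \<Rightarrow> nat) \<Rightarrow> nat \<Rightarrow> bool" where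
  "is_descent p c i \<longleftrightarrow> c (Suc i) < c i \<or> (c i = c (Suc i) \<and> p (Suc i) < p i)"

lemma cdes_eq_card_descents: "cdes n (p, c) = card {i\<in>{1..n}. is_descent p c i}"
  by (simp add: cdes_def is_descent_def)

lemma card_filter_atLeastAtMost_Suc:
  "card {i\<in>{1..Suc m}. Q i} = (if Q 1 then 1 else 0) + card {i\<in>{1..m}. Q (Suc i)}"
proof -
  have "{i\<in>{1..Suc m}. Q i} = {i\<in>{1}. Q i} \<union> Suc ` {i\<in>{1..m}. Q (Suc i)}"
  proof (rule set_eqI)
    fix x show "x \<in> {i\<in>{1..Suc m}. Q i} \<longleftrightarrow> x \<in> {i\<in>{1}. Q i} \<union> Suc ` {i\<in>{1..m}. Q (Suc i)}"
      by (cases x; cases "x - 1") auto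
  qed
  then have "card {i\<in>{1..Suc m}. Q i} = card {i\<in>{1}. Q i} + card (Suc ` {i\<in>{1..m}. Q (Suc i)})"
    by (simp only:) (rule card_Un_disjoint; auto)
  also have "\<dots> = (if Q 1 then 1 else 0) + card {i\<in>{1..m}. Q (Suc i)}"
    by (simp add: card_image Collect_conv_if)
  finally show ?thesis .
qed

lemma cdes_cons:
  assumes "(p, c) \<in> colored_perms r m" "1 \<le> m" "v \<in> {1..Suc m}"
  shows "cdes (Suc m) (cons_perm m v p, cons_colour m col c) =
     (if c 1 < col \<or> (c 1 = col \<and> p 1 < v) then 1 else 0) + cdes m (p, c)"
proof -
  have p: "p permutes {1..m}" and c: "\<forall>i. i \<notin> {1..m} \<longrightarrow> c i = 0"
    using assms(1) by (auto simp: colored_perms_def)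
  let ?P = "cons_perm m v p" and ?C = "cons_colour m col c"
  have first: "is_descent ?P ?C 1 \<longleftrightarrow> c 1 < col \<or> (c 1 = col \<and> p 1 < v)"
    using assms(2) by (auto simp: is_descent_def cons_perm_def cons_colour_def)
  have "is_descent ?P ?C (Suc i) \<longleftrightarrow> is_descent p c i" if i: "i \<in> {1..m}" for i
  proof (cases "i < m")
    case True
    then show ?thesis using i by (simp add: is_descent_def cons_perm_simps)
  next
    case False
    then have "i = m" using i by simp
    moreover have "p m \<le> m" using permutes_in_image[OF p, of m] assms(2) by simp
    ultimately show ?thesis
      using assms(2) c permutes_not_in[OF p, of "Suc m"]
      by (auto simp: is_descent_def cons_perm_simps shift_above_def cons_perm_def cons_colour_def)
  qed
  then have "{i\<in>{1..m}. is_descent ?P ?C (Suc i)} = {i\<in>{1..m}. is_descent p c i}"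
    by blast
  then show ?thesis
    unfolding cdes_eq_card_descents card_filter_atLeastAtMost_Suc first by simp
qed

definition bad_position :: "nat \<Rightarrow> (nat \<Rightarrow> nat) \<Rightarrow> (nat \<Rightarrow> nat) \<Rightarrow> nat \<Rightarrow> bool" where
  "bad_position N p c j \<longleftrightarrow>
     (\<forall>k\<in>{j<..N}. p j < p k) \<and> (\<forall>k\<in>{j..N}. p (j - 1) < p k) \<and> c j = c (j - 1)"

definition no_bad_after_first :: "nat \<Rightarrow> (nat \<Rightarrow> nat) \<times> (nat \<Rightarrow> nat) \<Rightarrow> bool" where
  "no_bad_after_first N \<sigma> \<longleftrightarrow> (\<forall>j\<in>{2..N}. \<not> bad_position N (fst \<sigma>) (snd \<sigma>) j)"

lemma ball_atLeastAtMost_Suc: "(\<forall>k\<in>{Suc a..Suc m}. Q k) \<longleftrightarrow> (\<forall>k\<in>{a..m}. Q (Suc k))"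
  by (simp flip: image_Suc_atLeastAtMost)

lemma bad_position_cons_2:
  assumes "(p, c) \<in> colored_perms r m" "1 \<le> m" "v \<in> {1..Suc m}" "col < r"
  shows "bad_position (Suc m) (cons_perm m v p) (cons_colour m col c) 2 \<longleftrightarrow>
     v = 1 \<and> p 1 = 1 \<and> c 1 = col"
proof -
  let ?P = "cons_perm m v p" and ?C = "cons_colour m col c"
  have p: "p permutes {1..m}" using assms(1) by (simp add: colored_perms_def)
  have P: "?P permutes {1..Suc m}"
    using cons_in_colored_perms[OF assms(1,3,4)] by (simp add: colored_perms_def)
  have at2: "?P 2 = shift_above v (p 1)" "?C 2 = c 1"
    using cons_perm_simps(2,4)[of 1 m] assms(2) by (simp_all add: numeral_2_eq_2)
  have "(\<forall>k\<in>{2<..Suc m}. ?P 2 < ?P k) \<longleftrightarrow> (\<forall>k\<in>{Suc 2..Suc m}. ?P 2 < ?P k)"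
    by (simp only: atLeastSucAtMost_greaterThanAtMost)
  also have "\<dots> \<longleftrightarrow> (\<forall>k\<in>{1<..m}. p 1 < p k)"
    unfolding ball_atLeastAtMost_Suc using at2 cons_perm_simps(2)[of _ m v p]
    by (auto simp: numeral_2_eq_2)
  also have "\<dots> \<longleftrightarrow> p 1 = 1" using permutes_first_min_iff[OF p assms(2)] .
  finally have A: "(\<forall>k\<in>{2<..Suc m}. ?P 2 < ?P k) \<longleftrightarrow> p 1 = 1" .
  have "(\<forall>k\<in>{2..Suc m}. ?P 1 < ?P k) \<longleftrightarrow> (\<forall>k\<in>{1<..Suc m}. ?P 1 < ?P k)"
    by (auto simp: numeral_2_eq_2 Suc_le_eq)
  also have "\<dots> \<longleftrightarrow> ?P 1 = 1" by (rule permutes_first_min_iff[OF P]) simp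
  also have "\<dots> \<longleftrightarrow> v = 1" by (simp only: cons_perm_simps)
  finally have B: "(\<forall>k\<in>{2..Suc m}. ?P 1 < ?P k) \<longleftrightarrow> v = 1" .
  have "?C 1 = col" by (simp only: cons_perm_simps)
  then show ?thesis unfolding bad_position_def using A B at2 by auto
qed

lemma bad_position_cons_Suc:
  assumes "(p, c) \<in> colored_perms r m" "j \<in> {2..m}"
  shows "bad_position (Suc m) (cons_perm m v p) (cons_colour m col c) (Suc j) \<longleftrightarrow>
     bad_position m p c j"
proof -
  let ?P = "cons_perm m v p" and ?C = "cons_colour m col c"
  have j: "j \<in> {1..m}" "j - 1 \<in> {1..m}" "Suc (j - 1) = j" using assms(2) by auto
  have "(\<forall>k\<in>{Suc j<..Suc m}. ?P (Suc j) < ?P k) \<longleftrightarrow> (\<forall>k\<in>{j<..m}. p j < p k)"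
    unfolding atLeastSucAtMost_greaterThanAtMost[symmetric] ball_atLeastAtMost_Suc
    using j cons_perm_simps(2)[of _ m v p] by auto
  moreover have "(\<forall>k\<in>{Suc j..Suc m}. ?P j < ?P k) \<longleftrightarrow> (\<forall>k\<in>{j..m}. p (j - 1) < p k)"
    unfolding ball_atLeastAtMost_Suc
    using j assms(2) cons_perm_simps(2)[of _ m v p] cons_perm_simps(2)[of "j - 1" m v p]
    by (metis (no_types, lifting) atLeastAtMost_iff le_trans shift_above_less_iff)
  moreover have "?C (Suc j) = c j" "?C j = c (j - 1)"
    using cons_perm_simps(4)[of j m col c] cons_perm_simps(4)[of "j - 1" m col c] j by simp_all
  ultimately show ?thesis unfolding bad_position_def by simp
qed

lemma no_bad_after_first_cons:
  assumes "(p, c) \<in> colored_perms r m" "1 \<le> m" "v \<in> {1..Suc m}" "col < r"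
  shows "no_bad_after_first (Suc m) (cons_perm m v p, cons_colour m col c) \<longleftrightarrow>
     no_bad_after_first m (p, c) \<and> \<not> (v = 1 \<and> p 1 = 1 \<and> c 1 = col)"
proof -
  have split: "{2..Suc m} = insert 2 {Suc 2..Suc m}" using assms(2) by auto
  show ?thesis
    unfolding no_bad_after_first_def fst_conv snd_conv split ball_simps(7) ball_atLeastAtMost_Suc
    using bad_position_cons_2[OF assms] bad_position_cons_Suc[OF assms(1)] by auto
qed

section \<open>Colored permutations by their first letter\<close>

lemma radix_eq_iff:
  fixes a b x y M :: nat
  assumes "x < M" "y < M"
  shows "a * M + x = b * M + y \<longleftrightarrow> a = b \<and> x = y"
proof
  assume eq: "a * M + x = b * M + y"
  have "a = (a * M + x) div M" "b = (b * M + y) div M" using assms by simp_all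
  moreover have "x = (a * M + x) mod M" "y = (b * M + y) mod M" using assms by simp_all
  ultimately show "a = b \<and> x = y" using eq by metis
qed simp

lemma radix_less_iff:
  fixes a b x y M :: nat
  assumes "x < M" "y < M"
  shows "b * M + y < a * M + x \<longleftrightarrow> b < a \<or> (b = a \<and> y < x)"
proof (cases b a rule: linorder_cases)
  case less
  then have "(b + 1) * M \<le> a * M" by (intro mult_le_mono1) simp
  then show ?thesis using less assms by (simp add: algebra_simps)
next
  case greater
  then have "(a + 1) * M \<le> b * M" by (intro mult_le_mono1) simp
  then show ?thesis using greater assms by (simp add: algebra_simps)
qed simp

lemma scaled_code_compare:
  fixes K col c' a b :: nat
  assumes a: "a \<le> K" and b: "b < K"
  shows "(col * (K + 1) + a) * K = (c' * K + b) * (K + 1) \<longleftrightarrow> col = c' \<and> a = 0 \<and> b = 0"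
    and "(c' * K + b) * (K + 1) < (col * (K + 1) + a) * K \<longleftrightarrow> c' < col \<or> (c' = col \<and> b < a)"
proof -
  define M where "M = K * (K + 1)"
  have L: "(col * (K + 1) + a) * K = col * M + a * K"
    and R: "(c' * K + b) * (K + 1) = c' * M + b * (K + 1)"
    by (simp_all add: M_def algebra_simps)
  have "a * K \<le> K * K" using a by simp
  moreover have "K * K < M" using b by (simp add: M_def)
  ultimately have aK: "a * K < M" by linarith
  have bK: "b * (K + 1) < M" unfolding M_def using b by (intro mult_strict_right_mono) simp_all
  have up: "b * (K + 1) < a * K" if "b < a"
  proof -
    have "(b + 1) * K \<le> a * K" using that by (intro mult_le_mono1) simp
    then show ?thesis using b by (simp add: algebra_simps)
  qed
  have down: "a * K \<le> b * (K + 1)" if "a \<le> b"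
    using that by (metis le_add1 mult_le_mono)
  have down_eq: "a = 0 \<and> b = 0" if eq: "a * K = b * (K + 1)" and "a \<le> b"
  proof -
    have "a * K \<le> b * K" using \<open>a \<le> b\<close> by simp
    moreover have "a * K = b * K + b" using eq by (simp add: algebra_simps)
    ultimately have "b = 0" by linarith
    then show ?thesis using eq b by simp
  qed
  have low_less: "b * (K + 1) < a * K \<longleftrightarrow> b < a"
    using up down by (meson leD not_le)
  have low_eq: "a * K = b * (K + 1) \<longleftrightarrow> a = 0 \<and> b = 0"
  proof
    assume "a * K = b * (K + 1)"
    then show "a = 0 \<and> b = 0" using up down_eq by (metis less_irrefl not_le)
  qed simp
  show "(col * (K + 1) + a) * K = (c' * K + b) * (K + 1) \<longleftrightarrow> col = c' \<and> a = 0 \<and> b = 0"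
    unfolding L R radix_eq_iff[OF aK bK] low_eq by simp
  show "(c' * K + b) * (K + 1) < (col * (K + 1) + a) * K \<longleftrightarrow> c' < col \<or> (c' = col \<and> b < a)"
    unfolding L R radix_less_iff[OF aK bK] low_less ..
qed

definition first_code :: "nat \<Rightarrow> (nat \<Rightarrow> nat) \<times> (nat \<Rightarrow> nat) \<Rightarrow> nat" where
  "first_code m \<sigma> = snd \<sigma> 1 * m + (fst \<sigma> 1 - 1)"

lemma first_letter_range:
  assumes "(p, c) \<in> colored_perms r m" "1 \<le> m"
  shows "p 1 \<in> {1..m}" "c 1 < r"
  using assms permutes_in_image[of p "{1..m}" 1] by (auto simp: colored_perms_def)

lemma first_code_less:
  assumes "\<sigma> \<in> colored_perms r m" "1 \<le> m"
  shows "first_code m \<sigma> < m * r"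
proof -
  obtain p c where \<sigma>: "\<sigma> = (p, c)" by fastforce
  have "p 1 - 1 < m" using first_letter_range[OF assms[unfolded \<sigma>]] by auto
  then have "first_code m \<sigma> < (c 1 + 1) * m" by (simp add: first_code_def \<sigma>)
  also have "\<dots> \<le> r * m"
    using first_letter_range[OF assms[unfolded \<sigma>]] by (intro mult_le_mono1) simp
  finally show ?thesis by (simp add: mult.commute)
qed

lemma first_code_eq_iff:
  assumes "(p, c) \<in> colored_perms r m" "v \<in> {1..m}"
  shows "first_code m (p, c) = col * m + (v - 1) \<longleftrightarrow> c 1 = col \<and> p 1 = v"
proof -
  have p1: "p 1 \<in> {1..m}" using first_letter_range(1)[OF assms(1)] assms(2) by simp
  then have "p 1 - 1 < m" "v - 1 < m" using assms(2) by auto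
  then have "first_code m (p, c) = col * m + (v - 1) \<longleftrightarrow> c 1 = col \<and> p 1 - 1 = v - 1"
    unfolding first_code_def fst_conv snd_conv by (rule radix_eq_iff)
  then show ?thesis using p1 assms(2) by auto
qed

text \<open>Prepending the letter \<open>v\<close> of colour \<open>col\<close> to \<open>(p, c)\<close>: the weight is \<open>0\<close> exactly when position 2
  becomes bad and \<open>z\<close> exactly when position 1 becomes a descent.\<close>

lemma transfer_weight_first_code:
  assumes "(p, c) \<in> colored_perms r m" "1 \<le> m" "v \<in> {1..Suc m}"
  shows "transfer_weight z (first_code m (p, c) * Suc m) ((col * Suc m + (v - 1)) * m) =
    (if v = 1 \<and> p 1 = 1 \<and> c 1 = col then 0
     else if c 1 < col \<or> (c 1 = col \<and> p 1 < v) then z else 1)"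
proof -
  have p1: "p 1 \<in> {1..m}" using first_letter_range(1)[OF assms(1,2)] .
  then have a: "v - 1 \<le> m" and b: "p 1 - 1 < m" using assms(3) by auto
  have A: "first_code m (p, c) * Suc m = (c 1 * m + (p 1 - 1)) * (m + 1)"
    and B: "(col * Suc m + (v - 1)) * m = (col * (m + 1) + (v - 1)) * m"
    by (simp_all add: first_code_def)
  have "first_code m (p, c) * Suc m = (col * Suc m + (v - 1)) * m \<longleftrightarrow>
      v = 1 \<and> p 1 = 1 \<and> c 1 = col"
    unfolding A B eq_commute[of "(c 1 * m + (p 1 - 1)) * (m + 1)"] scaled_code_compare(1)[OF a b]
    using p1 assms(3) by auto
  moreover have "first_code m (p, c) * Suc m < (col * Suc m + (v - 1)) * m \<longleftrightarrow>
      c 1 < col \<or> (c 1 = col \<and> p 1 < v)"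
    unfolding A B scaled_code_compare(2)[OF a b] using p1 assms(3) by auto
  ultimately show ?thesis unfolding transfer_weight_def by presburger
qed

lemma cdes_cons_transfer_weight:
  assumes "(p, c) \<in> colored_perms r m" "1 \<le> m" "v \<in> {1..Suc m}"
    and "\<not> (v = 1 \<and> p 1 = 1 \<and> c 1 = col)"
  shows "z ^ cdes (Suc m) (cons_perm m v p, cons_colour m col c) =
    transfer_weight z (first_code m (p, c) * Suc m) ((col * Suc m + (v - 1)) * m) * z ^ cdes m (p, c)"
  unfolding transfer_weight_first_code[OF assms(1-3)] if_not_P[OF assms(4)]
  by (simp add: cdes_cons[OF assms(1-3)] power_add)

definition perm_class_sum :: "nat \<Rightarrow> real \<Rightarrow> nat \<Rightarrow> nat \<Rightarrow> real" where
  "perm_class_sum r z m E =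
     (\<Sum>\<sigma>\<in>{\<sigma>\<in>colored_perms r m. no_bad_after_first m \<sigma> \<and> first_code m \<sigma> = E}. z ^ cdes m \<sigma>)"

lemma sum_by_first_code:
  assumes "1 \<le> m"
  shows "(\<Sum>\<sigma>\<in>{\<sigma>\<in>colored_perms r m. no_bad_after_first m \<sigma>}. f (first_code m \<sigma>) * z ^ cdes m \<sigma>)
       = (\<Sum>E<m * r. f E * perm_class_sum r z m E)"
proof -
  let ?T = "{\<sigma>\<in>colored_perms r m. no_bad_after_first m \<sigma>}"
  have "(\<Sum>\<sigma>\<in>?T. f (first_code m \<sigma>) * z ^ cdes m \<sigma>)
      = (\<Sum>E<m * r. \<Sum>\<sigma>\<in>{\<sigma>\<in>?T. first_code m \<sigma> = E}. f (first_code m \<sigma>) * z ^ cdes m \<sigma>)"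
    by (rule sum.group[symmetric]) (use finite_colored_perms first_code_less[OF _ assms] in auto)
  also have "\<dots> = (\<Sum>E<m * r. f E * perm_class_sum r z m E)"
    unfolding perm_class_sum_def sum_distrib_left by (intro sum.cong) auto
  finally show ?thesis .
qed

lemma perm_class_sum_1: "E < r \<Longrightarrow> perm_class_sum r z 1 E = perm_transfer r z 0 E"
proof -
  assume E: "E < r"
  define c where "c = (\<lambda>i::nat. if i = 1 then E else 0)"
  have "{\<sigma>\<in>colored_perms r 1. no_bad_after_first 1 \<sigma> \<and> first_code 1 \<sigma> = E} = {(id, c)}"
  proof (intro equalityI subsetI)
    fix \<sigma> assume "\<sigma> \<in> {\<sigma>\<in>colored_perms r 1. no_bad_after_first 1 \<sigma> \<and> first_code 1 \<sigma> = E}"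
    then show "\<sigma> \<in> {(id, c)}"
      by (cases \<sigma>) (auto simp: colored_perms_def first_code_def c_def fun_eq_iff)
  qed (use E in \<open>auto simp: colored_perms_def first_code_def c_def no_bad_after_first_def\<close>)
  moreover have "cdes 1 (id, c) = (if E = 0 then 0 else 1)"
    unfolding cdes_eq_card_descents by (auto simp: is_descent_def c_def)
  ultimately show ?thesis using E by (simp add: perm_class_sum_def)
qed

lemma no_bad_first_letter_eq_cons_image:
  assumes "1 \<le> m" "v \<in> {1..Suc m}" "col < r"
  shows "{\<sigma>\<in>colored_perms r (Suc m). no_bad_after_first (Suc m) \<sigma> \<and> fst \<sigma> 1 = v \<and> snd \<sigma> 1 = col}
    = (\<lambda>\<sigma>. (cons_perm m v (fst \<sigma>), cons_colour m col (snd \<sigma>))) `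
        {\<sigma>\<in>colored_perms r m. no_bad_after_first m \<sigma> \<and> \<not> (v = 1 \<and> fst \<sigma> 1 = 1 \<and> snd \<sigma> 1 = col)}"
proof (intro equalityI subsetI)
  fix \<sigma>
  assume "\<sigma> \<in> {\<sigma>\<in>colored_perms r (Suc m). no_bad_after_first (Suc m) \<sigma> \<and> fst \<sigma> 1 = v \<and> snd \<sigma> 1 = col}"
  then obtain p c where \<sigma>: "\<sigma> = (p, c)" and pc: "(p, c) \<in> colored_perms r (Suc m)"
    and good: "no_bad_after_first (Suc m) (p, c)" and first: "p 1 = v" "c 1 = col"
    by (cases \<sigma>) auto
  have tail: "(tail_perm m p, tail_colour m c) \<in> colored_perms r m" by (rule tail_in_colored_perms[OF pc])
  have cons: "cons_perm m v (tail_perm m p) = p" "cons_colour m col (tail_colour m c) = c"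
    using cons_tail[OF pc] first by auto
  then have "no_bad_after_first m (tail_perm m p, tail_colour m c) \<and>
      \<not> (v = 1 \<and> tail_perm m p 1 = 1 \<and> tail_colour m c 1 = col)"
    using no_bad_after_first_cons[OF tail assms] good by simp
  then show "\<sigma> \<in> (\<lambda>\<sigma>. (cons_perm m v (fst \<sigma>), cons_colour m col (snd \<sigma>))) `
        {\<sigma>\<in>colored_perms r m. no_bad_after_first m \<sigma> \<and> \<not> (v = 1 \<and> fst \<sigma> 1 = 1 \<and> snd \<sigma> 1 = col)}"
    using tail cons \<sigma> by (intro image_eqI[of _ _ "(tail_perm m p, tail_colour m c)"]) auto
next
  fix \<sigma>
  assume "\<sigma> \<in> (\<lambda>\<sigma>. (cons_perm m v (fst \<sigma>), cons_colour m col (snd \<sigma>))) `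
        {\<sigma>\<in>colored_perms r m. no_bad_after_first m \<sigma> \<and> \<not> (v = 1 \<and> fst \<sigma> 1 = 1 \<and> snd \<sigma> 1 = col)}"
  then obtain p c where \<sigma>: "\<sigma> = (cons_perm m v p, cons_colour m col c)"
    and pc: "(p, c) \<in> colored_perms r m" and good: "no_bad_after_first m (p, c)"
    and not_blocked: "\<not> (v = 1 \<and> p 1 = 1 \<and> c 1 = col)"
    by auto
  show "\<sigma> \<in> {\<sigma>\<in>colored_perms r (Suc m). no_bad_after_first (Suc m) \<sigma> \<and> fst \<sigma> 1 = v \<and> snd \<sigma> 1 = col}"
    using cons_in_colored_perms[OF pc assms(2,3)] no_bad_after_first_cons[OF pc assms] good not_blocked
    by (simp add: \<sigma> cons_perm_def cons_colour_def)
qed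

lemma perm_class_sum_Suc:
  assumes m: "1 \<le> m" and E: "E < Suc m * r"
  shows "perm_class_sum r z (Suc m) E =
    (\<Sum>E'<m * r. transfer_weight z (E' * Suc m) (E * m) * perm_class_sum r z m E')"
proof -
  define col where "col = E div Suc m"
  define v where "v = Suc (E mod Suc m)"
  have col: "col < r" using E unfolding col_def by (simp add: less_mult_imp_div_less mult.commute)
  have v: "v \<in> {1..Suc m}" unfolding v_def by (simp add: less_Suc_eq_le)
  have E_eq: "E = col * Suc m + (v - 1)"
    unfolding col_def v_def using div_mult_mod_eq[of E "Suc m"] by simp
  define cons where "cons = (\<lambda>\<sigma>::(nat \<Rightarrow> nat) \<times> (nat \<Rightarrow> nat).
    (cons_perm m v (fst \<sigma>), cons_colour m col (snd \<sigma>)))"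
  define T where "T = {\<sigma>\<in>colored_perms r m. no_bad_after_first m \<sigma>}"
  define S where "S = {\<sigma>\<in>colored_perms r m. no_bad_after_first m \<sigma> \<and>
    \<not> (v = 1 \<and> fst \<sigma> 1 = 1 \<and> snd \<sigma> 1 = col)}"
  let ?w = "\<lambda>\<sigma>. transfer_weight z (first_code m \<sigma> * Suc m) (E * m)"
  have "{\<sigma>\<in>colored_perms r (Suc m). no_bad_after_first (Suc m) \<sigma> \<and> first_code (Suc m) \<sigma> = E}
      = {\<sigma>\<in>colored_perms r (Suc m). no_bad_after_first (Suc m) \<sigma> \<and> fst \<sigma> 1 = v \<and> snd \<sigma> 1 = col}"
    unfolding E_eq using first_code_eq_iff[OF _ v] by fastforce
  also have "\<dots> = cons ` S"
    unfolding cons_def S_def by (rule no_bad_first_letter_eq_cons_image[OF m v col])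
  finally have first_letter_class: "{\<sigma>\<in>colored_perms r (Suc m). no_bad_after_first (Suc m) \<sigma> \<and> first_code (Suc m) \<sigma> = E}
      = cons ` S" .
  have inj: "inj_on cons S"
    unfolding cons_def by (rule inj_on_subset[OF inj_on_cons]) (auto simp: S_def)
  have weight: "z ^ cdes (Suc m) (cons \<sigma>) = ?w \<sigma> * z ^ cdes m \<sigma>" if "\<sigma> \<in> S" for \<sigma>
  proof -
    obtain p c where \<sigma>: "\<sigma> = (p, c)" by fastforce
    have pc: "(p, c) \<in> colored_perms r m" and allowed: "\<not> (v = 1 \<and> p 1 = 1 \<and> c 1 = col)"
      using that by (auto simp: S_def \<sigma>)
    show ?thesis unfolding cons_def \<sigma> E_eq using cdes_cons_transfer_weight[OF pc m v allowed] by simp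
  qed
  have vanish: "?w \<sigma> = 0" if "\<sigma> \<in> T - S" for \<sigma>
  proof -
    obtain p c where \<sigma>: "\<sigma> = (p, c)" by fastforce
    have pc: "(p, c) \<in> colored_perms r m" and blocked: "v = 1 \<and> p 1 = 1 \<and> c 1 = col"
      using that by (auto simp: S_def T_def \<sigma>)
    show ?thesis
      unfolding \<sigma> E_eq transfer_weight_first_code[OF pc m v] by (rule if_P[OF blocked])
  qed
  have "perm_class_sum r z (Suc m) E = (\<Sum>\<sigma>\<in>S. z ^ cdes (Suc m) (cons \<sigma>))"
    unfolding perm_class_sum_def first_letter_class by (rule sum.reindex[OF inj, unfolded comp_def])
  also have "\<dots> = (\<Sum>\<sigma>\<in>S. ?w \<sigma> * z ^ cdes m \<sigma>)"
    by (rule sum.cong[OF refl weight])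
  also have "\<dots> = (\<Sum>\<sigma>\<in>T. ?w \<sigma> * z ^ cdes m \<sigma>)"
    by (rule sum.mono_neutral_left) (use finite_colored_perms vanish in \<open>auto simp: S_def T_def\<close>)
  also have "\<dots> = (\<Sum>E'<m * r. transfer_weight z (E' * Suc m) (E * m) * perm_class_sum r z m E')"
    unfolding T_def by (rule sum_by_first_code[OF m])
  finally show ?thesis .
qed

lemma perm_class_sum_eq_perm_transfer:
  "E < Suc n * r \<Longrightarrow> perm_class_sum r z (Suc n) E = perm_transfer r z n E"
proof (induction n arbitrary: E)
  case 0
  then show ?case using perm_class_sum_1[of E r z] by simp
next
  case (Suc n)
  then show ?case by (simp add: perm_class_sum_Suc)
qed

lemma bad_set_empty_iff:
  assumes "\<sigma> \<in> colored_perms r n" "1 \<le> n"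
  shows "bad_set n \<sigma> = {} \<longleftrightarrow> no_bad_after_first n \<sigma> \<and> first_code n \<sigma> \<noteq> 0"
proof -
  obtain p c where \<sigma>: "\<sigma> = (p, c)" by fastforce
  have pc: "(p, c) \<in> colored_perms r n" using assms(1) by (simp add: \<sigma>)
  then have p: "p permutes {1..n}" and c0: "c 0 = 0" by (auto simp: colored_perms_def)
  have "bad_set n (p, c) = {} \<longleftrightarrow> (\<forall>j\<in>{1..n}. \<not> bad_position n p c j)"
  proof
    assume empty: "bad_set n (p, c) = {}"
    show "\<forall>j\<in>{1..n}. \<not> bad_position n p c j"
    proof (intro ballI notI)
      fix j assume "j \<in> {1..n}" "bad_position n p c j"
      then have "p j \<in> bad_set n (p, c)"
        using permutes_in_image[OF p, of j] by (auto simp: bad_set_def bad_position_def)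
      then show False using empty by simp
    qed
  qed (auto simp: bad_set_def bad_position_def)
  also have "\<dots> \<longleftrightarrow> \<not> bad_position n p c 1 \<and> no_bad_after_first n (p, c)"
  proof -
    have "{1..n} = insert 1 {2..n}" using assms(2) by auto
    then show ?thesis by (simp add: no_bad_after_first_def)
  qed
  also have "bad_position n p c 1 \<longleftrightarrow> p 1 = 1 \<and> c 1 = 0"
  proof -
    have "p 0 = 0" using permutes_not_in[OF p, of 0] by simp
    moreover have "p k \<in> {1..n}" if "k \<in> {1..n}" for k
      using that permutes_in_image[OF p] by simp
    ultimately have "\<forall>k\<in>{1..n}. p 0 < p k" by fastforce
    then show ?thesis
      unfolding bad_position_def using permutes_first_min_iff[OF p assms(2)] c0 by simp
  qed
  also have "p 1 = 1 \<and> c 1 = 0 \<longleftrightarrow> first_code n (p, c) = 0"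
    using first_code_eq_iff[OF pc, of 1 0] assms(2) by auto
  finally show ?thesis by (auto simp: \<sigma>)
qed

lemma sum_bad_free_colored_perms:
  assumes n: "0 < n"
  shows "(\<Sum>\<sigma>\<in>{\<sigma>\<in>colored_perms r n. bad_set n \<sigma> = {}}. z ^ cdes n \<sigma>)
       = (\<Sum>E\<in>{0<..<n * r}. perm_transfer r z (n - 1) E)"
proof -
  have n1: "1 \<le> n" using n by simp
  define T where "T = {\<sigma>\<in>colored_perms r n. no_bad_after_first n \<sigma>}"
  have "{\<sigma>\<in>colored_perms r n. bad_set n \<sigma> = {}} = {\<sigma>\<in>T. first_code n \<sigma> \<noteq> 0}"
    using bad_set_empty_iff[OF _ n1] by (auto simp: T_def)
  moreover have "finite T" using finite_colored_perms by (simp add: T_def)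
  ultimately have "(\<Sum>\<sigma>\<in>{\<sigma>\<in>colored_perms r n. bad_set n \<sigma> = {}}. z ^ cdes n \<sigma>)
      = (\<Sum>\<sigma>\<in>T. if first_code n \<sigma> \<noteq> 0 then z ^ cdes n \<sigma> else 0)"
    by (simp only: sum.inter_filter)
  also have "\<dots> = (\<Sum>\<sigma>\<in>T. (if first_code n \<sigma> = 0 then 0 else 1) * z ^ cdes n \<sigma>)"
    by (intro sum.cong) auto
  also have "\<dots> = (\<Sum>E<n * r. (if E = 0 then 0 else 1) * perm_class_sum r z n E)"
    unfolding T_def by (rule sum_by_first_code[OF n1])
  also have "\<dots> = (\<Sum>E\<in>{0<..<n * r}. perm_class_sum r z n E)"
    unfolding sum_greaterThanLessThan_0 by (intro sum.cong) auto
  also have "(\<Sum>E\<in>{0<..<n * r}. perm_class_sum r z n E) = (\<Sum>E\<in>{0<..<n * r}. perm_transfer r z (n - 1) E)"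
  proof (rule sum.cong[OF refl])
    fix E assume "E \<in> {0<..<n * r}"
    then have "E < Suc (n - 1) * r" using n by simp
    then show "perm_class_sum r z n E = perm_transfer r z (n - 1) E"
      using perm_class_sum_eq_perm_transfer[of E "n - 1" r z] n by simp
  qed
  finally show ?thesis .
qed

section \<open>The vertices of \<open>P\<^sub>m\<^sup>t\<close>\<close>

definition scaled_coord :: "nat \<Rightarrow> (nat \<Rightarrow> nat) \<Rightarrow> (nat \<Rightarrow> real) \<Rightarrow> nat \<Rightarrow> real" where
  "scaled_coord m t x j = (if j = 0 then 0 else if j = m + 1 then 1 else x j / real (t j))"

lemma Pset_iff:
  "x \<in> Pset m t \<longleftrightarrow> (\<forall>j. j \<notin> {1..m} \<longrightarrow> x j = 0) \<and>
     (\<forall>j\<le>m. scaled_coord m t x j \<le> scaled_coord m t x (Suc j))"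
  by (simp add: Pset_def scaled_coord_def Let_def)

lemma bounded_chain_mono:
  fixes y :: "nat \<Rightarrow> real"
  assumes "\<forall>j\<le>m. y j \<le> y (Suc j)" "i \<le> j" "j \<le> Suc m"
  shows "y i \<le> y j"
  using assms(2,3)
proof (induction j)
  case (Suc j)
  then show ?case using assms(1) by (cases "i = Suc j") (auto intro: order_trans)
qed simp

lemma scaled_coord_bounds:
  assumes "x \<in> Pset m t" "j \<le> Suc m"
  shows "0 \<le> scaled_coord m t x j" "scaled_coord m t x j \<le> 1"
proof -
  have "\<forall>j\<le>m. scaled_coord m t x j \<le> scaled_coord m t x (Suc j)" using assms(1) by (simp add: Pset_iff)
  from bounded_chain_mono[OF this, of 0 j] bounded_chain_mono[OF this, of j "Suc m"] assms(2)
  show "0 \<le> scaled_coord m t x j" "scaled_coord m t x j \<le> 1" by (simp_all add: scaled_coord_def)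
qed

lemma Pset_coord_bounds:
  assumes "x \<in> Pset m t" "j \<in> {1..m}" "0 < t j"
  shows "0 \<le> x j" "x j \<le> real (t j)"
proof -
  have "scaled_coord m t x j = x j / real (t j)" using assms(2) by (simp add: scaled_coord_def)
  moreover have "j \<le> Suc m" using assms(2) by simp
  ultimately have "0 \<le> x j / real (t j)" "x j / real (t j) \<le> 1"
    using scaled_coord_bounds[OF assms(1)] by metis+
  then show "0 \<le> x j" "x j \<le> real (t j)"
    using assms(3) by (simp_all add: zero_le_divide_iff divide_le_eq_1)
qed

definition chain_vertex :: "nat \<Rightarrow> (nat \<Rightarrow> nat) \<Rightarrow> nat \<Rightarrow> nat \<Rightarrow> real" where
  "chain_vertex m t k = (\<lambda>j. if k < j \<and> j \<le> m then real (t j) else 0)"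

lemma chain_vertex_in_Pset:
  assumes "k \<le> m" and tpos: "\<forall>j\<in>{1..m}. 0 < t j"
  shows "chain_vertex m t k \<in> Pset m t"
  unfolding Pset_iff
proof (intro conjI allI impI)
  fix j assume "j \<le> m"
  then consider "j = 0" | "j = m" | "1 \<le> j \<and> j < m" by linarith
  then show "scaled_coord m t (chain_vertex m t k) j \<le> scaled_coord m t (chain_vertex m t k) (Suc j)"
  proof cases
    case 3
    then have "0 < t j" "0 < t (Suc j)" using tpos by auto
    then show ?thesis using 3 by (auto simp: scaled_coord_def chain_vertex_def)
  qed (use assms in \<open>auto simp: scaled_coord_def chain_vertex_def\<close>)
qed (auto simp: chain_vertex_def)

lemma chain_vertex_is_vertex:
  assumes "k \<le> m" and tpos: "\<forall>j\<in>{1..m}. 0 < t j"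
  shows "chain_vertex m t k \<in> vertices (Pset m t)"
  unfolding vertices_def
proof (intro CollectI conjI notI)
  show "chain_vertex m t k \<in> Pset m t" by (rule chain_vertex_in_Pset[OF assms])
  assume "\<exists>a\<in>Pset m t. \<exists>b\<in>Pset m t. a \<noteq> b \<and>
    (\<exists>u. 0 < u \<and> u < 1 \<and> chain_vertex m t k = (\<lambda>i. u * a i + (1 - u) * b i))"
  then obtain a b u where ab: "a \<in> Pset m t" "b \<in> Pset m t" "a \<noteq> b" and u: "0 < u" "u < 1"
    and comb: "chain_vertex m t k = (\<lambda>i. u * a i + (1 - u) * b i)" by blast
  have "a j = b j" for j
  proof (cases "j \<in> {1..m}")
    case False
    then show ?thesis using ab(1,2) by (simp add: Pset_iff)
  next
    case True
    have tj: "0 < t j" using tpos True by simp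
    note bounds = Pset_coord_bounds[OF ab(1) True tj] Pset_coord_bounds[OF ab(2) True tj]
    have comb_j: "chain_vertex m t k j = u * a j + (1 - u) * b j" using comb by (rule fun_cong)
    show ?thesis
    proof (cases "k < j")
      case True
      then have "u * (real (t j) - a j) + (1 - u) * (real (t j) - b j) = 0"
        using comb_j \<open>j \<in> {1..m}\<close> by (simp add: chain_vertex_def algebra_simps)
      then show ?thesis using u bounds by (simp add: add_nonneg_eq_0_iff)
    next
      case False
      then have "u * a j + (1 - u) * b j = 0" using comb_j by (simp add: chain_vertex_def)
      then show ?thesis using u bounds by (simp add: add_nonneg_eq_0_iff)
    qed
  qed
  then show False using ab(3) by auto
qed

text \<open>A point with a coordinate strictly between \<open>0\<close> and \<open>t\<^sub>j\<close> is the midpoint of the two distinct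
  points obtained by moving every scaled coordinate \<open>s\<close> to \<open>s \<plusminus> s (1 - s) / 2\<close>; these maps are
  monotone on \<open>[0, 1]\<close> and fix \<open>0\<close> and \<open>1\<close>, so they preserve \<open>Pset\<close>.\<close>

definition perturb :: "real \<Rightarrow> real \<Rightarrow> real" where
  "perturb e s = s + e * (s * (1 - s))"

lemma perturb_mono:
  assumes "\<bar>e\<bar> \<le> 1" "0 \<le> s" "s \<le> s'" "s' \<le> 1"
  shows "perturb e s \<le> perturb e s'"
proof -
  have "\<bar>1 - s - s'\<bar> \<le> 1" using assms by auto
  then have "\<bar>e * (1 - s - s')\<bar> \<le> 1" using assms(1) by (metis abs_ge_zero abs_mult mult_le_one)
  then have "0 \<le> (s' - s) * (1 + e * (1 - s - s'))" using assms(3) by (intro mult_nonneg_nonneg) auto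
  moreover have "perturb e s' - perturb e s = (s' - s) * (1 + e * (1 - s - s'))"
    by (simp add: perturb_def algebra_simps)
  ultimately show ?thesis by linarith
qed

lemma Pset_map_scaled_coords:
  assumes x: "x \<in> Pset m t" and tpos: "\<forall>j\<in>{1..m}. 0 < t j"
    and mono: "\<And>s s'. 0 \<le> s \<Longrightarrow> s \<le> s' \<Longrightarrow> s' \<le> 1 \<Longrightarrow> g s \<le> g s'"
    and g0: "g 0 = 0" and g1: "g 1 = 1"
  shows "(\<lambda>i. if i \<in> {1..m} then real (t i) * g (x i / real (t i)) else 0) \<in> Pset m t"
proof -
  let ?a = "\<lambda>i. if i \<in> {1..m} then real (t i) * g (x i / real (t i)) else 0"
  have scaled: "scaled_coord m t ?a j = g (scaled_coord m t x j)" if "j \<le> Suc m" for j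
  proof -
    have "j = 0 \<or> j = Suc m \<or> j \<in> {1..m}" using that by auto
    then consider "j = 0" | "j = Suc m" | "j \<in> {1..m}" by blast
    then show ?thesis
    proof cases
      case 3
      then have "0 < t j" using tpos by simp
      then show ?thesis using 3 by (simp add: scaled_coord_def)
    qed (simp_all add: scaled_coord_def g0 g1)
  qed
  have "\<forall>j\<le>m. scaled_coord m t x j \<le> scaled_coord m t x (Suc j)" using x by (simp add: Pset_iff)
  then have "scaled_coord m t ?a j \<le> scaled_coord m t ?a (Suc j)" if "j \<le> m" for j
    using that mono scaled_coord_bounds[OF x, of j] scaled_coord_bounds[OF x, of "Suc j"]
      scaled[of j] scaled[of "Suc j"] by simp
  then show ?thesis unfolding Pset_iff by auto
qed

lemma vertex_coord_extreme:
  assumes v: "x \<in> vertices (Pset m t)" and tpos: "\<forall>j\<in>{1..m}. 0 < t j" and j: "j \<in> {1..m}"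
  shows "x j = 0 \<or> x j = real (t j)"
proof (rule ccontr)
  assume interior: "\<not> (x j = 0 \<or> x j = real (t j))"
  have x: "x \<in> Pset m t" using v by (simp add: vertices_def)
  define a where "a = (\<lambda>i. if i \<in> {1..m} then real (t i) * perturb (1/2) (x i / real (t i)) else 0)"
  define b where "b = (\<lambda>i. if i \<in> {1..m} then real (t i) * perturb (-1/2) (x i / real (t i)) else 0)"
  have mono: "\<And>s s'. 0 \<le> s \<Longrightarrow> s \<le> s' \<Longrightarrow> s' \<le> 1 \<Longrightarrow> perturb e s \<le> perturb e s'"
    if "\<bar>e\<bar> \<le> 1" for e
    using perturb_mono that by blast
  have a: "a \<in> Pset m t" and b: "b \<in> Pset m t"
    unfolding a_def b_def
    by (rule Pset_map_scaled_coords[OF x tpos mono]; simp add: perturb_def)+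
  moreover have "a \<noteq> b"
  proof -
    have tj: "0 < t j" using tpos j by simp
    define s where "s = x j / real (t j)"
    have "0 < s" "s < 1"
      using Pset_coord_bounds[OF x j tj] interior tj by (auto simp: s_def)
    then have "a j - b j = real (t j) * (s * (1 - s))"
      using j by (simp add: a_def b_def s_def perturb_def algebra_simps)
    moreover have "0 < real (t j) * (s * (1 - s))" using \<open>0 < s\<close> \<open>s < 1\<close> tj by simp
    ultimately show ?thesis by auto
  qed
  moreover have "x = (\<lambda>i. (1/2) * a i + (1 - 1/2) * b i)"
  proof
    fix i
    show "x i = (1/2) * a i + (1 - 1/2) * b i"
    proof (cases "i \<in> {1..m}")
      case True
      then have "real (t i) \<noteq> 0" using tpos by simp
      then show ?thesis using True by (simp add: a_def b_def perturb_def field_simps)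
    next
      case False
      then have "x i = 0" using x by (simp add: Pset_iff)
      then show ?thesis unfolding a_def b_def if_not_P[OF False] by simp
    qed
  qed
  ultimately have "\<exists>a\<in>Pset m t. \<exists>b\<in>Pset m t. a \<noteq> b \<and>
      (\<exists>u::real. 0 < u \<and> u < 1 \<and> x = (\<lambda>i. u * a i + (1 - u) * b i))"
    using a b by (intro bexI[of _ a] bexI[of _ b] conjI exI[of _ "1/2"]) auto
  then show False using v unfolding vertices_def by blast
qed

lemma vertex_is_chain_vertex:
  assumes v: "x \<in> vertices (Pset m t)" and tpos: "\<forall>j\<in>{1..m}. 0 < t j"
  shows "\<exists>k\<le>m. x = chain_vertex m t k"
proof -
  have x: "x \<in> Pset m t" using v by (simp add: vertices_def)
  have chain: "\<forall>j\<le>m. scaled_coord m t x j \<le> scaled_coord m t x (Suc j)" using x by (simp add: Pset_iff)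
  define K where "K = {j. j \<le> m \<and> scaled_coord m t x j = 0}"
  have K: "finite K" "0 \<in> K" by (auto simp: K_def scaled_coord_def)
  define k where "k = Max K"
  have "k \<in> K" unfolding k_def using Max_in K by blast
  then have k: "k \<le> m" "scaled_coord m t x k = 0" by (simp_all add: K_def)
  have k_max: "j \<le> k" if "j \<le> m" "scaled_coord m t x j = 0" for j
    unfolding k_def using Max_ge[OF K(1)] that by (simp add: K_def)
  have "x j = chain_vertex m t k j" for j
  proof (cases "j \<in> {1..m}")
    case True
    have tj: "0 < t j" using tpos True by simp
    have y: "scaled_coord m t x j = x j / real (t j)" using True by (simp add: scaled_coord_def)
    show ?thesis
    proof (cases "j \<le> k")
      case True
      then have "scaled_coord m t x j \<le> 0" using bounded_chain_mono[OF chain True] k by simp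
      moreover have "0 \<le> scaled_coord m t x j" using scaled_coord_bounds[OF x, of j] \<open>j \<in> {1..m}\<close> by simp
      ultimately have "x j = 0" using y tj by simp
      then show ?thesis using True by (simp add: chain_vertex_def)
    next
      case False
      then have "x j \<noteq> 0" using k_max[of j] \<open>j \<in> {1..m}\<close> y by auto
      then have "x j = real (t j)" using vertex_coord_extreme[OF v tpos \<open>j \<in> {1..m}\<close>] by blast
      then show ?thesis using False \<open>j \<in> {1..m}\<close> by (simp add: chain_vertex_def)
    qed
  next
    case False
    then show ?thesis using x by (auto simp: Pset_iff chain_vertex_def)
  qed
  then show ?thesis using k(1) by blast
qed

lemma vertices_Pset:
  assumes "\<forall>j\<in>{1..m}. 0 < t j"
  shows "vertices (Pset m t) = chain_vertex m t ` {0..m}"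
  using vertex_is_chain_vertex[OF _ assms] chain_vertex_is_vertex[OF _ assms] by fastforce

lemma inj_on_chain_vertex:
  assumes tpos: "\<forall>j\<in>{1..m}. 0 < t j"
  shows "inj_on (chain_vertex m t) {0..m}"
proof (rule inj_onI)
  fix k k' assume k: "k \<in> {0..m}" and k': "k' \<in> {0..m}" and eq: "chain_vertex m t k = chain_vertex m t k'"
  show "k = k'"
  proof (rule ccontr)
    assume "k \<noteq> k'"
    then obtain i j where ij: "{i, j} = {k, k'}" "i < j" by (metis insert_commute linorder_neqE_nat)
    then have "chain_vertex m t i j \<noteq> chain_vertex m t j j" using tpos k k' by (auto simp: chain_vertex_def)
    then show False using eq ij by (auto simp: doubleton_eq_iff)
  qed
qed

section \<open>Lattice points of the open parallelepiped\<close>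

definition lattice_scaled_coord ::
    "nat \<Rightarrow> (nat \<Rightarrow> nat) \<Rightarrow> (nat \<Rightarrow> int) \<Rightarrow> nat \<Rightarrow> nat \<Rightarrow> real" where
  "lattice_scaled_coord m t x h j =
     (if j = 0 then 0 else if j = Suc m then real h else real_of_int (x j) / real (t j))"

text \<open>The lattice points of the open parallelepiped over the vertices of \<open>Pset m t\<close>: the barycentric
  coordinate of \<open>chain_vertex m t k\<close> is the increment of \<open>lattice_scaled_coord\<close> from \<open>k\<close> to \<open>k + 1\<close>.\<close>

definition open_chain_points :: "nat \<Rightarrow> (nat \<Rightarrow> nat) \<Rightarrow> ((nat \<Rightarrow> int) \<times> nat) set" where
  "open_chain_points m t = {(x, h). (\<forall>j. j \<notin> {1..m} \<longrightarrow> x j = 0) \<and>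
     (\<forall>j\<le>m. lattice_scaled_coord m t x h j < lattice_scaled_coord m t x h (Suc j) \<and>
        lattice_scaled_coord m t x h (Suc j) < lattice_scaled_coord m t x h j + 1)}"

lemma sum_chain_vertex_coord:
  assumes tpos: "\<forall>j\<in>{1..m}. 0 < t j"
  shows "(\<Sum>v\<in>chain_vertex m t ` {0..m}. lam v * v j) =
     (if j \<in> {1..m} then real (t j) * (\<Sum>k<j. lam (chain_vertex m t k)) else 0)"
proof -
  have "(\<Sum>v\<in>chain_vertex m t ` {0..m}. lam v * v j) = (\<Sum>k\<in>{0..m}. lam (chain_vertex m t k) * chain_vertex m t k j)"
    by (rule sum.reindex[OF inj_on_chain_vertex[OF tpos], unfolded comp_def])
  also have "\<dots> = (if j \<in> {1..m} then real (t j) * (\<Sum>k<j. lam (chain_vertex m t k)) else 0)"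
  proof (cases "j \<in> {1..m}")
    case True
    have "(\<Sum>k\<in>{0..m}. lam (chain_vertex m t k) * chain_vertex m t k j)
        = (\<Sum>k\<in>{0..m} \<inter> {k. k < j}. lam (chain_vertex m t k) * real (t j))"
      using True by (simp add: sum.inter_restrict chain_vertex_def if_distrib cong: if_cong)
    also have "{0..m} \<inter> {k. k < j} = {..<j}" using True by auto
    finally show ?thesis using True by (simp add: sum_distrib_left mult.commute)
  qed (auto simp: chain_vertex_def intro!: sum.neutral)
  finally show ?thesis .
qed

lemma sum_chain_vertex_weights:
  assumes tpos: "\<forall>j\<in>{1..m}. 0 < t j"
  shows "(\<Sum>v\<in>chain_vertex m t ` {0..m}. lam v) = (\<Sum>k<Suc m. lam (chain_vertex m t k))"
  using sum.reindex[OF inj_on_chain_vertex[OF tpos], of lam] atLeast0AtMost lessThan_Suc_atMost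
  by (simp add: comp_def)

lemma par_open_lattice_chain_vertices_subset:
  assumes tpos: "\<forall>j\<in>{1..m}. 0 < t j"
  shows "par_open_lattice (chain_vertex m t ` {0..m}) \<subseteq> open_chain_points m t"
proof clarify
  fix x h assume "(x, h) \<in> par_open_lattice (chain_vertex m t ` {0..m})"
  then obtain lam :: "(nat \<Rightarrow> real) \<Rightarrow> real" where
    lam: "\<forall>v\<in>chain_vertex m t ` {0..m}. 0 < lam v \<and> lam v < 1" and
    x: "\<forall>j. real_of_int (x j) = (\<Sum>v\<in>chain_vertex m t ` {0..m}. lam v * v j)" and
    h: "real h = (\<Sum>v\<in>chain_vertex m t ` {0..m}. lam v)"
    unfolding par_open_lattice_def by blast
  define P where "P = (\<lambda>j. \<Sum>k<j. lam (chain_vertex m t k))"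
  have xj: "real_of_int (x j) = (if j \<in> {1..m} then real (t j) * P j else 0)" for j
    using x sum_chain_vertex_coord[OF tpos, of lam j] unfolding P_def by simp
  have S: "lattice_scaled_coord m t x h j = P j" if "j \<le> Suc m" for j
  proof -
    have "j = 0 \<or> j = Suc m \<or> j \<in> {1..m}" using that by auto
    then consider "j = 0" | "j = Suc m" | "j \<in> {1..m}" by blast
    then show ?thesis
    proof cases
      case 2
      then show ?thesis using h sum_chain_vertex_weights[OF tpos, of lam]
        by (simp add: lattice_scaled_coord_def P_def)
    next
      case 3
      then have "0 < t j" using tpos by simp
      then show ?thesis using 3 xj[of j] by (simp add: lattice_scaled_coord_def)
    qed (simp add: lattice_scaled_coord_def P_def)
  qed
  have "x j = 0" if "j \<notin> {1..m}" for j
    using xj[of j] unfolding if_not_P[OF that] by simp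
  moreover have "lattice_scaled_coord m t x h (Suc j) - lattice_scaled_coord m t x h j = lam (chain_vertex m t j)"
    and "0 < lam (chain_vertex m t j) \<and> lam (chain_vertex m t j) < 1" if "j \<le> m" for j
    using S[of j] S[of "Suc j"] lam that by (simp_all add: P_def)
  ultimately show "(x, h) \<in> open_chain_points m t"
    unfolding open_chain_points_def by fastforce
qed

lemma open_chain_points_subset_par_open_lattice:
  assumes tpos: "\<forall>j\<in>{1..m}. 0 < t j"
  shows "open_chain_points m t \<subseteq> par_open_lattice (chain_vertex m t ` {0..m})"
proof clarify
  fix x h assume "(x, h) \<in> open_chain_points m t"
  then have support: "\<forall>j. j \<notin> {1..m} \<longrightarrow> x j = 0"
    and chain: "\<forall>j\<le>m. lattice_scaled_coord m t x h j < lattice_scaled_coord m t x h (Suc j) \<and>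
      lattice_scaled_coord m t x h (Suc j) < lattice_scaled_coord m t x h j + 1"
    unfolding open_chain_points_def by blast+
  let ?S = "lattice_scaled_coord m t x h"
  let ?k = "the_inv_into {0..m} (chain_vertex m t)"
  define lam where "lam = (\<lambda>v. ?S (Suc (?k v)) - ?S (?k v))"
  have lam_vertex: "lam (chain_vertex m t k) = ?S (Suc k) - ?S k" if "k \<le> m" for k
    unfolding lam_def using the_inv_into_f_f[OF inj_on_chain_vertex[OF tpos], of k] that by simp
  have telescope: "(\<Sum>k<j. lam (chain_vertex m t k)) = ?S j" if "j \<le> Suc m" for j
  proof -
    have "(\<Sum>k<j. lam (chain_vertex m t k)) = (\<Sum>k<j. ?S (Suc k) - ?S k)"
      using that lam_vertex by (intro sum.cong) auto
    also have "\<dots> = ?S j - ?S 0" by (rule sum_lessThan_telescope)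
    also have "?S 0 = 0" by (simp add: lattice_scaled_coord_def)
    finally show ?thesis by simp
  qed
  have "\<forall>v\<in>chain_vertex m t ` {0..m}. 0 < lam v \<and> lam v < 1"
    using lam_vertex chain by force
  moreover have "real_of_int (x j) = (\<Sum>v\<in>chain_vertex m t ` {0..m}. lam v * v j)" for j
  proof (cases "j \<in> {1..m}")
    case True
    then have "0 < t j" using tpos by simp
    then show ?thesis using telescope[of j] True sum_chain_vertex_coord[OF tpos, of lam j]
      by (simp add: lattice_scaled_coord_def)
  qed (use support sum_chain_vertex_coord[OF tpos, of lam j] in auto)
  moreover have "real h = (\<Sum>v\<in>chain_vertex m t ` {0..m}. lam v)"
    using sum_chain_vertex_weights[OF tpos, of lam] telescope[of "Suc m"]
    by (simp add: lattice_scaled_coord_def)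
  ultimately show "(x, h) \<in> par_open_lattice (chain_vertex m t ` {0..m})"
    unfolding par_open_lattice_def by blast
qed

lemma d_poly_eq_sum_open_chain_points:
  assumes "\<forall>j\<in>{1..m}. 0 < t j"
  shows "d_poly m t z = (\<Sum>p\<in>open_chain_points m t. z ^ snd p)"
  unfolding d_poly_def lstar_def vertices_Pset[OF assms]
  using par_open_lattice_chain_vertices_subset[OF assms] open_chain_points_subset_par_open_lattice[OF assms]
  by (metis equalityI)

section \<open>Integer chains for \<open>\<mu>\<close> and \<open>s\<close>\<close>

lemma frac_less_frac_iff:
  fixes x y d d' :: real
  assumes "0 < d" "0 < d'"
  shows "x / d < y / d' \<longleftrightarrow> x * d' < y * d"
  using assms by (simp add: field_simps)

lemma frac_step_less_iff:
  fixes A B :: int and j r :: nat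
  assumes "0 < j" "0 < r"
  shows "real_of_int A / (real j * real r) < real_of_int B / (real (Suc j) * real r) \<longleftrightarrow>
    A * int (Suc j) < B * int j"
proof -
  have pos: "0 < real j * real r" "0 < real (Suc j) * real r" using assms by simp_all
  have "real_of_int A / (real j * real r) < real_of_int B / (real (Suc j) * real r) \<longleftrightarrow>
      real_of_int A * (real (Suc j) * real r) < real_of_int B * (real j * real r)"
    by (rule frac_less_frac_iff[OF pos])
  also have "\<dots> \<longleftrightarrow> (real_of_int A * real (Suc j)) * real r < (real_of_int B * real j) * real r"
    by (simp only: mult.assoc)
  also have "\<dots> \<longleftrightarrow> A * int (Suc j) < B * int j"
    using assms(2)
    by (metis mult_less_cancel_right_pos of_int_less_iff of_int_mult of_int_of_nat_eq of_nat_0_less_iff)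
  finally show ?thesis .
qed

lemma frac_step_less_add_1_iff:
  fixes A B :: int and j r :: nat
  assumes "0 < j" "0 < r"
  shows "real_of_int B / (real (Suc j) * real r) < real_of_int A / (real j * real r) + 1 \<longleftrightarrow>
    B * int j < A * int (Suc j) + int (j * Suc j * r)"
proof -
  have pos: "0 < real j * real r" "0 < real (Suc j) * real r" using assms by simp_all
  have "real_of_int A / (real j * real r) + 1 = (real_of_int A + real j * real r) / (real j * real r)"
    using pos(1) assms by (simp add: add_divide_distrib)
  then have "real_of_int B / (real (Suc j) * real r) < real_of_int A / (real j * real r) + 1 \<longleftrightarrow>
      real_of_int B * (real j * real r) < (real_of_int A + real j * real r) * (real (Suc j) * real r)"
    by (simp only: frac_less_frac_iff[OF pos(2,1)])
  also have "\<dots> \<longleftrightarrow>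
      (real_of_int B * real j) * real r < (real_of_int A * real (Suc j) + real (j * Suc j * r)) * real r"
    by (simp add: algebra_simps)
  also have "\<dots> \<longleftrightarrow> real_of_int (B * int j) < real_of_int (A * int (Suc j) + int (j * Suc j * r))"
    using assms(2) by simp
  also have "\<dots> \<longleftrightarrow> B * int j < A * int (Suc j) + int (j * Suc j * r)"
    by (rule of_int_less_iff)
  finally show ?thesis .
qed

lemma frac_height_iff:
  fixes A :: int and h d :: nat
  assumes "0 < d"
  shows "real_of_int A / real d < real h \<longleftrightarrow> A < int (h * d)"
    and "real h < real_of_int A / real d + 1 \<longleftrightarrow> int (h * d) < A + int d"
proof -
  have "real_of_int A / real d < real h \<longleftrightarrow> real_of_int A < real (h * d)"
    using assms by (simp add: field_simps)
  then show "real_of_int A / real d < real h \<longleftrightarrow> A < int (h * d)"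
    by (metis of_int_less_iff of_int_of_nat_eq)
  have "real h < real_of_int A / real d + 1 \<longleftrightarrow> real (h * d) < real_of_int A + real d"
    using assms by (simp add: field_simps)
  then show "real h < real_of_int A / real d + 1 \<longleftrightarrow> int (h * d) < A + int d"
    by (metis of_int_add of_int_less_iff of_int_of_nat_eq)
qed

definition frac_coord :: "nat \<Rightarrow> nat \<Rightarrow> (nat \<Rightarrow> int) \<Rightarrow> nat \<Rightarrow> nat \<Rightarrow> real" where
  "frac_coord r n a h i = (if i = Suc n then real h else real_of_int (a i) / (real i * real r))"

definition frac_chain :: "nat \<Rightarrow> nat \<Rightarrow> (nat \<Rightarrow> int) \<Rightarrow> nat \<Rightarrow> bool" where
  "frac_chain r n a h \<longleftrightarrow> (\<forall>i\<in>{1..n}. frac_coord r n a h i < frac_coord r n a h (Suc i) \<and>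
     frac_coord r n a h (Suc i) < frac_coord r n a h i + 1)"

definition chain_points :: "nat \<Rightarrow> nat \<Rightarrow> (nat \<Rightarrow> int) set" where
  "chain_points r n = {a. (\<forall>j. j \<notin> {1..n} \<longrightarrow> a j = 0) \<and> 0 \<le> a 1 \<and> a 1 < int r \<and>
     (\<forall>j\<in>{1..<n}. a j * int (Suc j) < a (Suc j) * int j \<and>
        a (Suc j) * int j < a j * int (Suc j) + int (j * Suc j * r))}"

text \<open>The points of \<open>height_chain_points r n\<close> with \<open>a\<^sub>1 \<noteq> 0\<close> are the lattice points for
  \<open>\<mu> = (r, 2r, \<dots>, nr)\<close>; those with \<open>a\<^sub>1 = 0\<close> are, after dropping \<open>a\<^sub>1\<close>, the lattice points for
  \<open>s = (2r, \<dots>, nr)\<close>.\<close>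

definition height_chain_points :: "nat \<Rightarrow> nat \<Rightarrow> ((nat \<Rightarrow> int) \<times> nat) set" where
  "height_chain_points r n = {(a, h). a \<in> chain_points r n \<and>
     a n < int (h * (n * r)) \<and> int (h * (n * r)) < a n + int (n * r)}"

lemma height_chain_points_iff:
  assumes n: "0 < n" and r: "0 < r"
  shows "(a, h) \<in> height_chain_points r n \<longleftrightarrow>
    (\<forall>j. j \<notin> {1..n} \<longrightarrow> a j = 0) \<and> 0 \<le> a 1 \<and> a 1 < int r \<and> frac_chain r n a h"
proof -
  have step: "(frac_coord r n a h j < frac_coord r n a h (Suc j) \<and>
        frac_coord r n a h (Suc j) < frac_coord r n a h j + 1) \<longleftrightarrow>
      (a j * int (Suc j) < a (Suc j) * int j \<and> a (Suc j) * int j < a j * int (Suc j) + int (j * Suc j * r))"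
    if "j \<in> {1..<n}" for j
    using that frac_step_less_iff[OF _ r, of j "a j" "a (Suc j)"] frac_step_less_add_1_iff[OF _ r, of j "a (Suc j)" "a j"]
    by (simp add: frac_coord_def)
  have last: "(frac_coord r n a h n < frac_coord r n a h (Suc n) \<and>
        frac_coord r n a h (Suc n) < frac_coord r n a h n + 1) \<longleftrightarrow>
      (a n < int (h * (n * r)) \<and> int (h * (n * r)) < a n + int (n * r))"
    using frac_height_iff[where d="n * r" and A="a n" and h=h] n r by (simp add: frac_coord_def)
  have "{1..n} = insert n {1..<n}" using n by auto
  then have "frac_chain r n a h \<longleftrightarrow>
      (\<forall>j\<in>{1..<n}. a j * int (Suc j) < a (Suc j) * int j \<and>
        a (Suc j) * int j < a j * int (Suc j) + int (j * Suc j * r)) \<and>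
      (a n < int (h * (n * r)) \<and> int (h * (n * r)) < a n + int (n * r))"
    unfolding frac_chain_def using step last by auto
  then show ?thesis unfolding height_chain_points_def chain_points_def by auto
qed

lemma open_chain_points_mu:
  assumes n: "0 < n" and r: "0 < r"
  shows "open_chain_points n (\<lambda>j. j * r) = {p \<in> height_chain_points r n. fst p 1 \<noteq> 0}"
proof (rule set_eqI)
  fix p :: "(nat \<Rightarrow> int) \<times> nat"
  obtain a h where p: "p = (a, h)" by fastforce
  have coord: "lattice_scaled_coord n (\<lambda>j. j * r) a h j = (if j = 0 then 0 else frac_coord r n a h j)" for j
    by (simp add: lattice_scaled_coord_def frac_coord_def)
  have "{..n} = insert 0 {1..n}" by auto
  then have "(\<forall>j\<le>n. lattice_scaled_coord n (\<lambda>j. j * r) a h j < lattice_scaled_coord n (\<lambda>j. j * r) a h (Suc j) \<and>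
      lattice_scaled_coord n (\<lambda>j. j * r) a h (Suc j) < lattice_scaled_coord n (\<lambda>j. j * r) a h j + 1) \<longleftrightarrow>
    (0 < frac_coord r n a h 1 \<and> frac_coord r n a h 1 < 1) \<and> frac_chain r n a h"
    unfolding frac_chain_def coord atMost_def by (auto simp: Ball_def)
  moreover have "frac_coord r n a h 1 = real_of_int (a 1) / real r"
    using n by (simp add: frac_coord_def)
  moreover have "(0 < real_of_int (a 1) / real r \<and> real_of_int (a 1) / real r < 1) \<longleftrightarrow>
      0 < a 1 \<and> a 1 < int r"
    using r by (simp add: divide_less_eq zero_less_divide_iff) (metis of_int_less_iff of_int_of_nat_eq)
  ultimately show "p \<in> open_chain_points n (\<lambda>j. j * r) \<longleftrightarrow> p \<in> {p \<in> height_chain_points r n. fst p 1 \<noteq> 0}"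
    unfolding p open_chain_points_def using height_chain_points_iff[OF n r, of a h] by auto
qed

lemma open_chain_points_shift_iff:
  assumes n: "0 < n" and r: "0 < r" and a0: "a 0 = 0" and a1: "a 1 = 0"
  shows "((\<lambda>j. a (Suc j)), h) \<in> open_chain_points (n - 1) (\<lambda>j. (j + 1) * r) \<longleftrightarrow>
    (a, h) \<in> height_chain_points r n"
proof -
  let ?S = "lattice_scaled_coord (n - 1) (\<lambda>j. (j + 1) * r) (\<lambda>j. a (Suc j)) h"
  have coord: "?S j = frac_coord r n a h (Suc j)" if "j \<le> n" for j
  proof -
    have "j = 0 \<or> j = n \<or> (1 \<le> j \<and> j < n)" using that by auto
    then show ?thesis
      using n a1 by (auto simp: lattice_scaled_coord_def frac_coord_def algebra_simps)
  qed
  have "(\<forall>j\<le>n - 1. ?S j < ?S (Suc j) \<and> ?S (Suc j) < ?S j + 1) \<longleftrightarrow>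
      (\<forall>j\<in>{0..n - 1}. frac_coord r n a h (Suc j) < frac_coord r n a h (Suc (Suc j)) \<and>
        frac_coord r n a h (Suc (Suc j)) < frac_coord r n a h (Suc j) + 1)"
    using coord n by (auto simp: Suc_le_eq)
  also have "\<dots> \<longleftrightarrow> (\<forall>i\<in>{Suc 0..Suc (n - 1)}. frac_coord r n a h i < frac_coord r n a h (Suc i) \<and>
        frac_coord r n a h (Suc i) < frac_coord r n a h i + 1)"
    by (rule ball_atLeastAtMost_Suc[symmetric])
  also have "\<dots> \<longleftrightarrow> frac_chain r n a h"
    unfolding frac_chain_def using n by simp
  finally have chain: "(\<forall>j\<le>n - 1. ?S j < ?S (Suc j) \<and> ?S (Suc j) < ?S j + 1) \<longleftrightarrow> frac_chain r n a h" .
  have support: "(\<forall>j. j \<notin> {1..n - 1} \<longrightarrow> a (Suc j) = 0) \<longleftrightarrow> (\<forall>j. j \<notin> {1..n} \<longrightarrow> a j = 0)"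
  proof (intro iffI allI impI)
    fix j assume shifted: "\<forall>j. j \<notin> {1..n - 1} \<longrightarrow> a (Suc j) = 0" and j: "j \<notin> {1..n}"
    show "a j = 0"
    proof (cases j)
      case (Suc k)
      then have "k \<notin> {1..n - 1}" using j by auto
      then show ?thesis using shifted Suc by simp
    qed (use a0 in simp)
  next
    fix j assume "\<forall>j. j \<notin> {1..n} \<longrightarrow> a j = 0" "j \<notin> {1..n - 1}"
    then show "a (Suc j) = 0" using a1 by (cases j) auto
  qed
  show ?thesis
    unfolding open_chain_points_def height_chain_points_iff[OF n r] using chain support a1 r by simp
qed

lemma open_chain_points_shift_eq_image:
  assumes n: "0 < n" and r: "0 < r"
  shows "open_chain_points (n - 1) (\<lambda>j. (j + 1) * r) =
    (\<lambda>p. ((\<lambda>j. fst p (Suc j)), snd p)) ` {p \<in> height_chain_points r n. fst p 1 = 0}"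
proof (intro equalityI subsetI)
  fix q assume q: "q \<in> open_chain_points (n - 1) (\<lambda>j. (j + 1) * r)"
  obtain x h where xh: "q = (x, h)" by fastforce
  define a where "a = (\<lambda>j. if j = 0 then 0 else x (j - 1))"
  have "x 0 = 0" using q by (simp add: xh open_chain_points_def)
  then have a: "a 0 = 0" "a 1 = 0" "(\<lambda>j. a (Suc j)) = x" by (simp_all add: a_def)
  then have "(a, h) \<in> height_chain_points r n"
    using open_chain_points_shift_iff[OF n r a(1,2), of h] q by (simp add: xh)
  then show "q \<in> (\<lambda>p. ((\<lambda>j. fst p (Suc j)), snd p)) ` {p \<in> height_chain_points r n. fst p 1 = 0}"
    using a xh by (intro image_eqI[of _ _ "(a, h)"]) auto
next
  fix q assume "q \<in> (\<lambda>p. ((\<lambda>j. fst p (Suc j)), snd p)) ` {p \<in> height_chain_points r n. fst p 1 = 0}"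
  then obtain a h where ah: "(a, h) \<in> height_chain_points r n" "a 1 = 0" "q = ((\<lambda>j. a (Suc j)), h)"
    by auto
  have a0: "a 0 = 0" using ah(1) by (simp add: height_chain_points_def chain_points_def)
  show "q \<in> open_chain_points (n - 1) (\<lambda>j. (j + 1) * r)"
    using open_chain_points_shift_iff[OF n r a0 ah(2), of h] ah by simp
qed

lemma inj_on_drop_first_coord:
  "inj_on (\<lambda>p. ((\<lambda>j. fst p (Suc j)), snd p)) {p \<in> height_chain_points r n. fst p 1 = 0}"
proof (rule inj_onI)
  fix p q
  assume p: "p \<in> {p \<in> height_chain_points r n. fst p 1 = 0}"
    and q: "q \<in> {p \<in> height_chain_points r n. fst p 1 = 0}"
    and eq: "((\<lambda>j. fst p (Suc j)), snd p) = ((\<lambda>j. fst q (Suc j)), snd q)"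
  have "fst p 0 = 0" "fst q 0 = 0"
    using p q by (auto simp: height_chain_points_def chain_points_def)
  then have "fst p j = fst q j" for j
    using eq by (cases j) (auto dest: fun_cong[where x = "j - 1"])
  then show "p = q" using eq by (simp add: prod_eq_iff fun_eq_iff)
qed

section \<open>Extending an integer chain\<close>

lemma window_iff:
  fixes M D d :: int
  assumes M: "0 < M" and D: "- M < D" "D < M"
  shows "(0 < d * M + D \<and> d * M + D < M) \<longleftrightarrow> D \<noteq> 0 \<and> d = (if D < 0 then 1 else 0)"
proof -
  consider "d \<le> -1" | "d = 0" | "d = 1" | "2 \<le> d" by linarith
  then show ?thesis
  proof cases
    case 1
    then have "d * M \<le> (-1) * M" using M by (intro mult_right_mono) simp_all
    then have "\<not> 0 < d * M + D" using D by linarith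
    then show ?thesis using 1 by auto
  next
    case 4
    then have "2 * M \<le> d * M" using M by (intro mult_right_mono) simp_all
    then have "\<not> d * M + D < M" using D by linarith
    then show ?thesis using 4 by auto
  qed (use D in auto)
qed

lemma extension_step_iff:
  fixes A B :: int and N r E :: nat
  assumes N: "1 \<le> N" and r: "0 < r" and E: "E < Suc N * r"
    and B: "B mod int (Suc N * r) = int E"
  defines "D \<equiv> int E * int N - (A mod int (N * r)) * int (Suc N)"
  shows "(A * int (Suc N) < B * int N \<and> B * int N < A * int (Suc N) + int (N * Suc N * r)) \<longleftrightarrow>
    D \<noteq> 0 \<and> B div int (Suc N * r) = A div int (N * r) + (if D < 0 then 1 else 0)"
proof -
  define R where "R = int (N * r)"
  define R' where "R' = int (Suc N * r)"
  define M where "M = int (N * Suc N * r)"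
  define e where "e = A mod R"
  have "0 < N * r" "0 < N * Suc N * r" using N r by simp_all
  then have pos: "0 < R" "0 < M" unfolding R_def M_def by (simp_all only: of_nat_0_less_iff)
  have RM: "R * int (Suc N) = M" "R' * int N = M" by (simp_all add: R_def R'_def M_def algebra_simps)
  have "A = (A div R) * R + e" unfolding e_def by simp
  then have A_eq: "A * int (Suc N) = (A div R) * M + e * int (Suc N)"
    unfolding RM(1)[symmetric] by (metis distrib_right mult.assoc)
  have "B = (B div R') * R' + int E" using B unfolding R'_def by (metis div_mult_mod_eq)
  then have B_eq: "B * int N = (B div R') * M + int E * int N"
    unfolding RM(2)[symmetric] by (metis distrib_right mult.assoc)
  have e: "0 \<le> e" "e < R" unfolding e_def using pos by simp_all
  have "e * int (Suc N) < R * int (Suc N)" using e by (intro mult_strict_right_mono) simp_all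
  moreover have "0 \<le> int E * int N" by simp
  ultimately have "- M < D" unfolding D_def e_def[symmetric] R_def[symmetric] RM(1) by linarith
  have "int E < R'" unfolding R'_def using E by (simp only: of_nat_less_iff)
  then have "int E * int N < R' * int N" using N by (intro mult_strict_right_mono) simp_all
  moreover have "0 \<le> e * int (Suc N)" using e(1) by simp
  ultimately have "D < M" unfolding D_def e_def[symmetric] R_def[symmetric] RM(2) by linarith
  have "(A * int (Suc N) < B * int N \<and> B * int N < A * int (Suc N) + M) \<longleftrightarrow>
      (0 < (B div R' - A div R) * M + D \<and> (B div R' - A div R) * M + D < M)"
    unfolding A_eq B_eq D_def e_def[symmetric] R_def[symmetric] by (simp add: algebra_simps)
  also have "\<dots> \<longleftrightarrow> D \<noteq> 0 \<and> B div R' - A div R = (if D < 0 then 1 else 0)"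
    by (rule window_iff[OF pos(2) \<open>- M < D\<close> \<open>D < M\<close>])
  finally show ?thesis by (auto simp: R_def R'_def M_def)
qed

lemma chain_points_Suc_iff:
  assumes N: "1 \<le> N"
  shows "b \<in> chain_points r (Suc N) \<longleftrightarrow> b(Suc N := 0) \<in> chain_points r N \<and>
     b N * int (Suc N) < b (Suc N) * int N \<and> b (Suc N) * int N < b N * int (Suc N) + int (N * Suc N * r)"
proof -
  have steps: "{1..<Suc N} = insert N {1..<N}" using N by auto
  have support: "(\<forall>j. j \<notin> {1..Suc N} \<longrightarrow> b j = 0) \<longleftrightarrow> (\<forall>j. j \<notin> {1..N} \<longrightarrow> (b(Suc N := 0)) j = 0)"
    by (auto simp: le_Suc_eq)
  have chain: "(\<forall>j\<in>{1..<N}. (b(Suc N := 0)) j * int (Suc j) < (b(Suc N := 0)) (Suc j) * int j \<and>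
        (b(Suc N := 0)) (Suc j) * int j < (b(Suc N := 0)) j * int (Suc j) + int (j * Suc j * r))
      \<longleftrightarrow> (\<forall>j\<in>{1..<N}. b j * int (Suc j) < b (Suc j) * int j \<and>
        b (Suc j) * int j < b j * int (Suc j) + int (j * Suc j * r))"
    by (intro ball_cong) auto
  have "(b(Suc N := 0)) 1 = b 1" using N by simp
  then show ?thesis unfolding chain_points_def mem_Collect_eq support chain steps by auto
qed

lemma chain_points_nonneg:
  assumes "a \<in> chain_points r N" "j \<in> {1..N}"
  shows "0 \<le> a j"
  using assms(2)
proof (induction j)
  case (Suc j)
  show ?case
  proof (cases "j = 0")
    case True
    then show ?thesis using assms(1) by (simp add: chain_points_def)
  next
    case False
    then have j: "j \<in> {1..<N}" using Suc.prems by auto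
    then have "0 \<le> a j * int (Suc j)" using Suc.IH by simp
    also have "a j * int (Suc j) < a (Suc j) * int j" using assms(1) j by (simp add: chain_points_def)
    finally show ?thesis using False by (simp add: zero_less_mult_iff)
  qed
qed simp

text \<open>Once the residue \<open>E\<close> of \<open>a\<^sub>N\<^sub>+\<^sub>1\<close> modulo \<open>(N + 1) r\<close> is fixed, a chain \<open>a\<close> for \<open>N\<close> has
  at most one admissible last coordinate, and it has one iff \<open>residue_gap r N E a \<noteq> 0\<close>.\<close>

definition residue_gap :: "nat \<Rightarrow> nat \<Rightarrow> nat \<Rightarrow> (nat \<Rightarrow> int) \<Rightarrow> int" where
  "residue_gap r N E a = int E * int N - (a N mod int (N * r)) * int (Suc N)"

definition chain_extend :: "nat \<Rightarrow> nat \<Rightarrow> nat \<Rightarrow> (nat \<Rightarrow> int) \<Rightarrow> nat \<Rightarrow> int" where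
  "chain_extend r N E a = a(Suc N := int (Suc N * r) *
     (a N div int (N * r) + (if residue_gap r N E a < 0 then 1 else 0)) + int E)"

lemma mult_add_mod_div:
  fixes R X e :: int
  assumes "0 \<le> e" "e < R"
  shows "(R * X + e) mod R = e" and "(R * X + e) div R = X"
proof -
  have "(e + X * R) mod R = e" "(e + X * R) div R = X" using assms by simp_all
  then show "(R * X + e) mod R = e" "(R * X + e) div R = X" by (simp_all add: algebra_simps)
qed

lemma chain_extend_last:
  assumes "E < Suc N * r"
  shows "chain_extend r N E a (Suc N) mod int (Suc N * r) = int E"
    and "chain_extend r N E a (Suc N) div int (Suc N * r) =
      a N div int (N * r) + (if residue_gap r N E a < 0 then 1 else 0)"
proof -
  have "0 \<le> int E" "int E < int (Suc N * r)" using assms by (simp_all only: of_nat_0_le_iff of_nat_less_iff)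
  then show "chain_extend r N E a (Suc N) mod int (Suc N * r) = int E"
    and "chain_extend r N E a (Suc N) div int (Suc N * r) =
      a N div int (N * r) + (if residue_gap r N E a < 0 then 1 else 0)"
    unfolding chain_extend_def fun_upd_same by (rule mult_add_mod_div)+
qed

lemma chain_points_Suc_residue_eq_image:
  assumes N: "1 \<le> N" and r: "0 < r" and E: "E < Suc N * r"
  shows "{b \<in> chain_points r (Suc N). b (Suc N) mod int (Suc N * r) = int E} =
    chain_extend r N E ` {a \<in> chain_points r N. residue_gap r N E a \<noteq> 0}"
proof (intro equalityI subsetI)
  fix b assume "b \<in> {b \<in> chain_points r (Suc N). b (Suc N) mod int (Suc N * r) = int E}"
  then have b: "b \<in> chain_points r (Suc N)" and b_mod: "b (Suc N) mod int (Suc N * r) = int E" by auto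
  define a where "a = b(Suc N := 0)"
  have a: "a \<in> chain_points r N"
    and step: "b N * int (Suc N) < b (Suc N) * int N \<and> b (Suc N) * int N < b N * int (Suc N) + int (N * Suc N * r)"
    using b chain_points_Suc_iff[OF N] unfolding a_def by auto
  have "a N = b N" by (simp add: a_def)
  then have gap: "residue_gap r N E a \<noteq> 0" and
    b_div: "b (Suc N) div int (Suc N * r) = a N div int (N * r) + (if residue_gap r N E a < 0 then 1 else 0)"
    using extension_step_iff[OF N r E b_mod, of "b N"] step by (simp_all add: residue_gap_def)
  have "b (Suc N) = int (Suc N * r) * (b (Suc N) div int (Suc N * r)) + int E"
    using b_mod by (metis div_mult_mod_eq mult.commute)
  then have "chain_extend r N E a = b" unfolding chain_extend_def a_def b_div by auto
  then show "b \<in> chain_extend r N E ` {a \<in> chain_points r N. residue_gap r N E a \<noteq> 0}"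
    using a gap by blast
next
  fix b assume "b \<in> chain_extend r N E ` {a \<in> chain_points r N. residue_gap r N E a \<noteq> 0}"
  then obtain a where a: "a \<in> chain_points r N" and gap: "residue_gap r N E a \<noteq> 0"
    and b: "b = chain_extend r N E a" by auto
  have b_mod: "b (Suc N) mod int (Suc N * r) = int E" using chain_extend_last(1)[OF E] b by simp
  have "b N = a N" "b(Suc N := 0) = a" using a by (auto simp: b chain_extend_def chain_points_def)
  then have "b N * int (Suc N) < b (Suc N) * int N \<and> b (Suc N) * int N < b N * int (Suc N) + int (N * Suc N * r)"
    using extension_step_iff[OF N r E b_mod, of "b N"] gap chain_extend_last(2)[OF E, of a] b
    by (simp add: residue_gap_def)
  then show "b \<in> {b \<in> chain_points r (Suc N). b (Suc N) mod int (Suc N * r) = int E}"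
    using chain_points_Suc_iff[OF N] \<open>b(Suc N := 0) = a\<close> a b_mod by simp
qed

lemma inj_on_chain_extend: "inj_on (chain_extend r N E) (chain_points r N)"
proof (rule inj_onI)
  fix a a' assume a: "a \<in> chain_points r N" "a' \<in> chain_points r N"
    and eq: "chain_extend r N E a = chain_extend r N E a'"
  show "a = a'"
  proof
    fix j
    show "a j = a' j"
    proof (cases "j = Suc N")
      case True
      then show ?thesis using a by (simp add: chain_points_def)
    next
      case False
      then show ?thesis using fun_cong[OF eq, of j] by (simp add: chain_extend_def)
    qed
  qed
qed

lemma chain_points_1: "chain_points r 1 = (\<lambda>e j. if j = 1 then e else 0) ` {0..<int r}"
proof (intro equalityI subsetI)
  fix a assume "a \<in> chain_points r 1"
  then have "\<forall>j. j \<noteq> 1 \<longrightarrow> a j = 0" "0 \<le> a 1" "a 1 < int r" by (auto simp: chain_points_def)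
  then show "a \<in> (\<lambda>e j. if j = 1 then e else 0) ` {0..<int r}"
    by (intro image_eqI[of _ _ "a 1"]) auto
qed (auto simp: chain_points_def)

lemma finite_chain_points:
  assumes r: "0 < r"
  shows "finite (chain_points r (Suc n))"
proof (induction n)
  case (Suc n)
  have "chain_points r (Suc (Suc n)) \<subseteq> (\<Union>E<Suc (Suc n) * r. chain_extend r (Suc n) E ` chain_points r (Suc n))"
  proof
    fix b assume b: "b \<in> chain_points r (Suc (Suc n))"
    define E where "E = nat (b (Suc (Suc n)) mod int (Suc (Suc n) * r))"
    have "0 < int (Suc (Suc n) * r)" using r by (simp only: of_nat_0_less_iff) simp
    then have E: "E < Suc (Suc n) * r" "int E = b (Suc (Suc n)) mod int (Suc (Suc n) * r)"
      unfolding E_def by (simp_all add: nat_less_iff)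
    then have "b \<in> chain_extend r (Suc n) E ` {a \<in> chain_points r (Suc n). residue_gap r (Suc n) E a \<noteq> 0}"
      using chain_points_Suc_residue_eq_image[of "Suc n" r E] b r by auto
    then show "b \<in> (\<Union>E<Suc (Suc n) * r. chain_extend r (Suc n) E ` chain_points r (Suc n))"
      using E(1) by blast
  qed
  moreover have "finite (\<Union>E<Suc (Suc n) * r. chain_extend r (Suc n) E ` chain_points r (Suc n))"
    using Suc.IH by simp
  ultimately show ?case by (rule finite_subset)
qed (use chain_points_1[of r] in simp)

definition lattice_class_sum :: "nat \<Rightarrow> real \<Rightarrow> nat \<Rightarrow> nat \<Rightarrow> real" where
  "lattice_class_sum r z N E =
     (\<Sum>a\<in>{a \<in> chain_points r N. a N mod int (N * r) = int E}. z ^ nat (a N div int (N * r)))"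

lemma sum_by_residue:
  assumes N: "1 \<le> N" and r: "0 < r"
  shows "(\<Sum>a\<in>chain_points r N. f (nat (a N mod int (N * r))) * z ^ nat (a N div int (N * r)))
       = (\<Sum>E<N * r. f E * lattice_class_sum r z N E)"
proof -
  have R: "0 < int (N * r)" using N r by simp
  have "finite (chain_points r N)" using finite_chain_points[OF r, of "N - 1"] N by simp
  then have "(\<Sum>a\<in>chain_points r N. f (nat (a N mod int (N * r))) * z ^ nat (a N div int (N * r)))
      = (\<Sum>E<N * r. \<Sum>a\<in>{a \<in> chain_points r N. nat (a N mod int (N * r)) = E}.
          f (nat (a N mod int (N * r))) * z ^ nat (a N div int (N * r)))"
    using R by (intro sum.group[symmetric]) (auto simp: nat_less_iff)
  also have "\<dots> = (\<Sum>E<N * r. f E * lattice_class_sum r z N E)"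
    unfolding lattice_class_sum_def sum_distrib_left using R
    by (intro sum.cong refl) (auto intro!: sum.cong)
  finally show ?thesis .
qed

lemma lattice_class_sum_1: "E < r \<Longrightarrow> lattice_class_sum r z 1 E = lattice_transfer r z 0 E"
proof -
  assume E: "E < r"
  have "{a \<in> chain_points r 1. a 1 mod int (1 * r) = int E} = {(\<lambda>j. if j = 1 then int E else 0)}"
    using E unfolding chain_points_1 by auto
  then show ?thesis using E by (simp add: lattice_class_sum_def)
qed

lemma transfer_weight_residue_gap:
  assumes "0 < N * r"
  shows "transfer_weight z (E * N) (nat (a N mod int (N * r)) * Suc N) =
    (if residue_gap r N E a = 0 then 0 else if residue_gap r N E a < 0 then z else 1)"
proof -
  have "int (nat (a N mod int (N * r)) * Suc N) = (a N mod int (N * r)) * int (Suc N)"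
    using assms by (simp add: algebra_simps)
  then have "E * N = nat (a N mod int (N * r)) * Suc N \<longleftrightarrow> residue_gap r N E a = 0"
    and "E * N < nat (a N mod int (N * r)) * Suc N \<longleftrightarrow> residue_gap r N E a < 0"
    unfolding residue_gap_def by (metis of_nat_eq_iff of_nat_mult eq_iff_diff_eq_0,
        metis of_nat_less_iff of_nat_mult diff_less_0_iff_less)
  then show ?thesis by (simp add: transfer_weight_def)
qed

lemma lattice_class_sum_Suc:
  assumes N: "1 \<le> N" and r: "0 < r" and E: "E < Suc N * r"
  shows "lattice_class_sum r z (Suc N) E =
    (\<Sum>E'<N * r. transfer_weight z (E * N) (E' * Suc N) * lattice_class_sum r z N E')"
proof -
  define S where "S = {a \<in> chain_points r N. residue_gap r N E a \<noteq> 0}"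
  let ?w = "\<lambda>a. transfer_weight z (E * N) (nat (a N mod int (N * r)) * Suc N)"
  let ?q = "\<lambda>a. nat (a N div int (N * r))"
  have R: "0 < N * r" using N r by simp
  have fin: "finite (chain_points r N)" using finite_chain_points[OF r, of "N - 1"] N by simp
  have inj: "inj_on (chain_extend r N E) S"
    using inj_on_chain_extend by (rule inj_on_subset) (auto simp: S_def)
  have weight: "z ^ nat (chain_extend r N E a (Suc N) div int (Suc N * r)) = ?w a * z ^ ?q a"
    if "a \<in> S" for a
  proof -
    have "0 \<le> a N" using chain_points_nonneg[of a r N N] that N by (simp add: S_def)
    then have "0 \<le> a N div int (N * r)" using R by (simp add: pos_imp_zdiv_nonneg_iff)
    then show ?thesis
      using that unfolding chain_extend_last(2)[OF E] transfer_weight_residue_gap[OF R]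
      by (simp add: S_def nat_add_distrib)
  qed
  have vanish: "?w a = 0" if "a \<in> chain_points r N - S" for a
    using that unfolding transfer_weight_residue_gap[OF R] by (simp add: S_def)
  have "lattice_class_sum r z (Suc N) E =
      (\<Sum>b\<in>chain_extend r N E ` S. z ^ nat (b (Suc N) div int (Suc N * r)))"
    unfolding lattice_class_sum_def S_def chain_points_Suc_residue_eq_image[OF N r E] ..
  also have "\<dots> = (\<Sum>a\<in>S. z ^ nat (chain_extend r N E a (Suc N) div int (Suc N * r)))"
    by (rule sum.reindex[OF inj, unfolded comp_def])
  also have "\<dots> = (\<Sum>a\<in>S. ?w a * z ^ ?q a)"
    by (rule sum.cong[OF refl weight])
  also have "\<dots> = (\<Sum>a\<in>chain_points r N. ?w a * z ^ ?q a)"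
    by (rule sum.mono_neutral_left) (use fin vanish in \<open>auto simp: S_def\<close>)
  also have "\<dots> = (\<Sum>E'<N * r. transfer_weight z (E * N) (E' * Suc N) * lattice_class_sum r z N E')"
    by (rule sum_by_residue[OF N r])
  finally show ?thesis .
qed

lemma lattice_class_sum_eq_lattice_transfer:
  assumes r: "0 < r"
  shows "E < Suc n * r \<Longrightarrow> lattice_class_sum r z (Suc n) E = lattice_transfer r z n E"
proof (induction n arbitrary: E)
  case 0
  then show ?case using lattice_class_sum_1[of E r z] by simp
next
  case (Suc n)
  then show ?case by (simp add: lattice_class_sum_Suc[OF _ r])
qed

lemma height_window_iff:
  fixes A :: int and R h :: nat
  assumes R: "0 < R" and A: "0 \<le> A"
  shows "(A < int (h * R) \<and> int (h * R) < A + int R) \<longleftrightarrow>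
    A mod int R \<noteq> 0 \<and> h = Suc (nat (A div int R))"
proof -
  define q where "q = A div int R"
  define e where "e = A mod int R"
  have e: "0 \<le> e" "e < int R" using R by (simp_all add: e_def)
  have q: "0 \<le> q" using R A by (simp add: q_def pos_imp_zdiv_nonneg_iff)
  have "A = q * int R + e" by (simp add: q_def e_def)
  then have "(A < int (h * R) \<and> int (h * R) < A + int R) \<longleftrightarrow>
      (0 < (int h - q) * int R + (- e) \<and> (int h - q) * int R + (- e) < int R)"
    by (simp add: algebra_simps)
  also have "\<dots> \<longleftrightarrow> - e \<noteq> 0 \<and> int h - q = (if - e < 0 then 1 else 0)"
    by (rule window_iff) (use R e in auto)
  also have "\<dots> \<longleftrightarrow> e \<noteq> 0 \<and> h = Suc (nat q)" using e q by auto
  finally show ?thesis by (simp add: q_def e_def)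
qed

lemma height_chain_points_eq_image:
  assumes n: "0 < n" and r: "0 < r"
  shows "height_chain_points r n = (\<lambda>a. (a, Suc (nat (a n div int (n * r))))) `
    {a \<in> chain_points r n. a n mod int (n * r) \<noteq> 0}"
proof -
  have "(a, h) \<in> height_chain_points r n \<longleftrightarrow>
      a \<in> chain_points r n \<and> a n mod int (n * r) \<noteq> 0 \<and> h = Suc (nat (a n div int (n * r)))" for a h
  proof -
    have "0 \<le> a n" if "a \<in> chain_points r n" using chain_points_nonneg[OF that, of n] n by simp
    then show ?thesis
      using height_window_iff[of "n * r" "a n" h] n r by (auto simp: height_chain_points_def)
  qed
  then show ?thesis by auto
qed

lemma sum_height_chain_points:
  assumes n: "0 < n" and r: "0 < r"
  shows "(\<Sum>p\<in>height_chain_points r n. z ^ snd p) = (\<Sum>E\<in>{0<..<n * r}. z * lattice_transfer r z (n - 1) E)"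
proof -
  have n1: "1 \<le> n" using n by simp
  have R: "0 < int (n * r)" using n r by simp
  define T where "T = {a \<in> chain_points r n. a n mod int (n * r) \<noteq> 0}"
  have fin: "finite T" using finite_chain_points[OF r, of "n - 1"] n by (simp add: T_def)
  have inj: "inj_on (\<lambda>a. (a, Suc (nat (a n div int (n * r))))) T" by (rule inj_onI) simp
  have "(\<Sum>p\<in>height_chain_points r n. z ^ snd p) = (\<Sum>a\<in>T. z * z ^ nat (a n div int (n * r)))"
    unfolding height_chain_points_eq_image[OF n r] T_def[symmetric]
    by (subst sum.reindex[OF inj]) (simp add: comp_def)
  also have "\<dots> = (\<Sum>a\<in>chain_points r n.
      if a n mod int (n * r) \<noteq> 0 then z * z ^ nat (a n div int (n * r)) else 0)"
    unfolding T_def by (rule sum.inter_filter) (use finite_chain_points[OF r, of "n - 1"] n in simp)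
  also have "\<dots> = (\<Sum>a\<in>chain_points r n.
      (if nat (a n mod int (n * r)) = 0 then 0 else z) * z ^ nat (a n div int (n * r)))"
  proof (rule sum.cong[OF refl])
    fix a
    have "0 \<le> a n mod int (n * r)" using R by simp
    then show "(if a n mod int (n * r) \<noteq> 0 then z * z ^ nat (a n div int (n * r)) else 0) =
        (if nat (a n mod int (n * r)) = 0 then 0 else z) * z ^ nat (a n div int (n * r))"
      by auto
  qed
  also have "\<dots> = (\<Sum>E<n * r. (if E = 0 then 0 else z) * lattice_class_sum r z n E)"
    by (rule sum_by_residue[OF n1 r])
  also have "\<dots> = (\<Sum>E\<in>{0<..<n * r}. z * lattice_class_sum r z n E)"
    unfolding sum_greaterThanLessThan_0 by (intro sum.cong) auto
  also have "\<dots> = (\<Sum>E\<in>{0<..<n * r}. z * lattice_transfer r z (n - 1) E)"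
  proof (rule sum.cong[OF refl])
    fix E assume "E \<in> {0<..<n * r}"
    then have "E < Suc (n - 1) * r" using n by simp
    then show "z * lattice_class_sum r z n E = z * lattice_transfer r z (n - 1) E"
      using lattice_class_sum_eq_lattice_transfer[OF r, of E "n - 1" z] n by simp
  qed
  finally show ?thesis .
qed

lemma d_poly_sum_eq_sum_height_chain_points:
  assumes n: "0 < n" and r: "0 < r"
  shows "d_poly (n - 1) (\<lambda>j. (j + 1) * r) z + d_poly n (\<lambda>j. j * r) z =
    (\<Sum>p\<in>height_chain_points r n. z ^ snd p)"
proof -
  have fin: "finite (height_chain_points r n)"
    using finite_chain_points[OF r, of "n - 1"] n by (simp add: height_chain_points_eq_image[OF n r])
  have s_pos: "\<forall>j\<in>{1..n - 1}. 0 < (j + 1) * r" and mu_pos: "\<forall>j\<in>{1..n}. 0 < j * r"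
    using r by simp_all
  have "d_poly (n - 1) (\<lambda>j. (j + 1) * r) z = (\<Sum>p\<in>{p \<in> height_chain_points r n. fst p 1 = 0}. z ^ snd p)"
    unfolding d_poly_eq_sum_open_chain_points[OF s_pos] open_chain_points_shift_eq_image[OF n r]
    by (subst sum.reindex[OF inj_on_drop_first_coord]) (simp add: comp_def)
  moreover have "d_poly n (\<lambda>j. j * r) z = (\<Sum>p\<in>{p \<in> height_chain_points r n. fst p 1 \<noteq> 0}. z ^ snd p)"
    unfolding d_poly_eq_sum_open_chain_points[OF mu_pos] open_chain_points_mu[OF n r] ..
  moreover have "(\<Sum>p\<in>{p \<in> height_chain_points r n. fst p 1 = 0}. z ^ snd p) +
      (\<Sum>p\<in>{p \<in> height_chain_points r n. fst p 1 \<noteq> 0}. z ^ snd p) = (\<Sum>p\<in>height_chain_points r n. z ^ snd p)"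
  proof -
    have parts: "{p \<in> height_chain_points r n. fst p 1 = 0} \<union> {p \<in> height_chain_points r n. fst p 1 \<noteq> 0}
        = height_chain_points r n" by auto
    have "(\<Sum>p\<in>{p \<in> height_chain_points r n. fst p 1 = 0} \<union> {p \<in> height_chain_points r n. fst p 1 \<noteq> 0}. z ^ snd p)
        = (\<Sum>p\<in>{p \<in> height_chain_points r n. fst p 1 = 0}. z ^ snd p) +
          (\<Sum>p\<in>{p \<in> height_chain_points r n. fst p 1 \<noteq> 0}. z ^ snd p)"
      by (rule sum.union_disjoint) (use fin in auto)
    then show ?thesis unfolding parts by simp
  qed
  ultimately show ?thesis by simp
qed

theorem lemma4p11:
  fixes n r :: nat and z :: real
  assumes "0 < n" and "0 < r"
  shows "d_poly (n - 1) (\<lambda>j. (j + 1) * r) z + d_poly n (\<lambda>j. j * r) z =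
    (\<Sum>\<sigma>\<in>{\<sigma>\<in>colored_perms r n. bad_set n \<sigma> = {}}. z ^ cdes n \<sigma>)"
proof -
  have "(\<Sum>\<sigma>\<in>{\<sigma>\<in>colored_perms r n. bad_set n \<sigma> = {}}. z ^ cdes n \<sigma>)
      = (\<Sum>E\<in>{0<..<n * r}. perm_transfer r z (n - 1) E)"
    by (rule sum_bad_free_colored_perms[OF assms(1)])
  also have "\<dots> = (\<Sum>E\<in>{0<..<n * r}. perm_transfer r z (n - 1) (reflect (n * r) E))"
    by (rule sum.reindex_bij_betw[OF bij_betw_reflect_nonzero, symmetric])
  also have "\<dots> = (\<Sum>E\<in>{0<..<n * r}. z * lattice_transfer r z (n - 1) E)"
  proof (rule sum.cong[OF refl])
    fix E assume "E \<in> {0<..<n * r}"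
    then show "perm_transfer r z (n - 1) (reflect (n * r) E) = z * lattice_transfer r z (n - 1) E"
      using perm_transfer_reflect[of E "n - 1" r z] assms(1) by simp
  qed
  also have "\<dots> = d_poly (n - 1) (\<lambda>j. (j + 1) * r) z + d_poly n (\<lambda>j. j * r) z"
    using sum_height_chain_points[OF assms] d_poly_sum_eq_sum_height_chain_points[OF assms] by simp
  finally show ?thesis ..
qed

end
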